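(* Let $G$ be a second countable locally compact Hausdorff groupoid with a fixed left Haar system $\lambda=\{\lambda^u\}_{u\in G^0}$, and let $(\Phi,\Psi)$ be a complementary pair of $N$-functions with $\Phi\in\Delta_2$. Given $u\in G^0$ and $g\in L^\Phi(G^u)$ with $\|g\|^0_\Phi\le k$, there exists $\eta\in E_0^\Phi$ such that $\eta^u=g$ and $\|\eta\|^0_\Phi\le k$.
   Context: $G^0$ is the unit space, $r(x)=xx^{-1}$, $d(x)=x^{-1}x$, $G^u=r^{-1}(u)$; the left Haar system consists of positive Radon measures $\lambda^u$ with support $G^u$, $u\mapsto\int f d\lambda^u$ continuous for $f\in C_c(G)$, and $\int f(xy)d\lambda^{d(x)}(y)=\int f(y)d\lambda^{r(x)}(y)$. An $N$-function is a continuous even convex $\Phi:\mathbb R\to[0,\infty)$ with $\Phi(x)=0$ iff $x=0$, $\Phi(x)/x\to0$ as $x\to0$, $\to\infty$ as $x\to\infty$; complementary function $\Psi(y)=\sup_{x\ge0}(x|y|-\Phi(x))$. $\Phi\in\Delta_2$: there is $k>0$ with $\Phi(2x)\le k\Phi(x)$ for all $x\ge0$ ($G$ non-compact), resp. for $x\ge x_0$, some $x_0>0$ ($G$ compact). $L^\Phi(G^u)$: measurable $f$ on $G^u$ with $\int\Phi(\alpha|f|)d\lambda^u<\infty$ for some $\alpha>0$, gauge norm $\|f\|^0_\Phi=\inf\{k>0:\int\Phi(|f|/k)d\lambda^u\le1\}$. For $f\in C_c(G)$, $f^u=f|_{G^u}$. $E_0^\Phi$ is the Banach space of sections $\xi=(\xi^u)$,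 $\xi^u\in L^\Phi(G^u)$, which are locally close to $C_c(G)$ (for each $u_0$, $\varepsilon>0$ there are $f\in C_c(G)$ and a neighbourhood $V$ of $u_0$ with $\|\xi^v-f^v\|^0_\Phi<\varepsilon$ on $V$) and with $u\mapsto\|\xi^u\|^0_\Phi$ vanishing at infinity, normed by $\|\xi\|^0_\Phi=\sup_u\|\xi^u\|^0_\Phi$. *)

theory Defs
  imports "HOL-Analysis.Analysis"
begin

text \<open>A groupoid on the whole carrier type 'g: G2 is the set of composable pairs,
  gm the (partial) multiplication, gi the inversion.\<close>

definition groupoid :: "('g \<times> 'g) set \<Rightarrow> ('g \<Rightarrow> 'g \<Rightarrow> 'g) \<Rightarrow> ('g \<Rightarrow> 'g) \<Rightarrow> bool" where
  "groupoid G2 gm gi \<longleftrightarrow>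
     (\<forall>x y z. (x, y) \<in> G2 \<and> (y, z) \<in> G2 \<longrightarrow>
        (gm x y, z) \<in> G2 \<and> (x, gm y z) \<in> G2 \<and> gm (gm x y) z = gm x (gm y z)) \<and>
     (\<forall>x. gi (gi x) = x) \<and>
     (\<forall>x. (x, gi x) \<in> G2) \<and>
     (\<forall>x y. (x, y) \<in> G2 \<longrightarrow> gm (gi x) (gm x y) = y) \<and>
     (\<forall>x y. (x, y) \<in> G2 \<longrightarrow> gm (gm x y) (gi y) = x)"

definition topological_groupoid ::
  "('g::topological_space \<times> 'g) set \<Rightarrow> ('g \<Rightarrow> 'g \<Rightarrow> 'g) \<Rightarrow> ('g \<Rightarrow> 'g) \<Rightarrow> bool" where
  "topological_groupoid G2 gm gi \<longleftrightarrow>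
     groupoid G2 gm gi \<and>
     continuous_on G2 (\<lambda>p. gm (fst p) (snd p)) \<and>
     continuous_on UNIV gi"

definition range_map :: "('g \<Rightarrow> 'g \<Rightarrow> 'g) \<Rightarrow> ('g \<Rightarrow> 'g) \<Rightarrow> 'g \<Rightarrow> 'g" where
  "range_map gm gi x = gm x (gi x)"

definition source_map :: "('g \<Rightarrow> 'g \<Rightarrow> 'g) \<Rightarrow> ('g \<Rightarrow> 'g) \<Rightarrow> 'g \<Rightarrow> 'g" where
  "source_map gm gi x = gm (gi x) x"

definition unit_space :: "('g \<Rightarrow> 'g \<Rightarrow> 'g) \<Rightarrow> ('g \<Rightarrow> 'g) \<Rightarrow> 'g set" where
  "unit_space gm gi = range (range_map gm gi)"

definition range_fibre :: "('g \<Rightarrow> 'g \<Rightarrow> 'g) \<Rightarrow> ('g \<Rightarrow> 'g) \<Rightarrow> 'g \<Rightarrow> 'g set" where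
  "range_fibre gm gi u = {x. range_map gm gi x = u}"

definition measure_support :: "'a::topological_space measure \<Rightarrow> 'a set" where
  "measure_support M = {x. \<forall>U. open U \<and> x \<in> U \<longrightarrow> emeasure M U > 0}"

text \<open>Positive Radon measure on a second countable locally compact Hausdorff space:
  a Borel measure that is finite on compact sets (in this setting such measures are
  automatically regular).\<close>
definition radon_measure :: "'a::topological_space measure \<Rightarrow> bool" where
  "radon_measure M \<longleftrightarrow> sets M = sets borel \<and> (\<forall>K. compact K \<longrightarrow> emeasure M K < \<infinity>)"

definition Cc :: "('a::topological_space \<Rightarrow> real) set" where
  "Cc = {f. continuous_on UNIV f \<and> compact (closure {x. f x \<noteq> 0})}"

definition left_haar_system ::
  "('g::topological_space \<times> 'g) set \<Rightarrow> ('g \<Rightarrow> 'g \<Rightarrow> 'g) \<Rightarrow> ('g \<Rightarrow> 'g) \<Rightarrow> ('g \<Rightarrow> 'g measure) \<Rightarrow> bool" where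
  "left_haar_system G2 gm gi lam \<longleftrightarrow>
     (\<forall>u \<in> unit_space gm gi.
        radon_measure (lam u) \<and> measure_support (lam u) = range_fibre gm gi u) \<and>
     (\<forall>f \<in> Cc. continuous_on (unit_space gm gi) (\<lambda>u. integral\<^sup>L (lam u) f)) \<and>
     (\<forall>f \<in> Cc. \<forall>x.
        (\<integral>y. f (gm x y) \<partial>(lam (source_map gm gi x)))
          = (\<integral>y. f y \<partial>(lam (range_map gm gi x))))"

definition N_function :: "(real \<Rightarrow> real) \<Rightarrow> bool" where
  "N_function \<Phi> \<longleftrightarrow>
     continuous_on UNIV \<Phi> \<and> (\<forall>x. \<Phi> (- x) = \<Phi> x) \<and> convex_on UNIV \<Phi> \<and>
     (\<forall>x. \<Phi> x \<ge> 0) \<and> (\<forall>x. \<Phi> x = 0 \<longleftrightarrow> x = 0) \<and>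
     ((\<lambda>x. \<Phi> x / x) \<longlongrightarrow> 0) (at 0) \<and>
     filterlim (\<lambda>x. \<Phi> x / x) at_top at_top"

definition complementary_function :: "(real \<Rightarrow> real) \<Rightarrow> real \<Rightarrow> real" where
  "complementary_function \<Phi> y = (SUP x \<in> {0..}. x * \<bar>y\<bar> - \<Phi> x)"

definition Delta2 :: "bool \<Rightarrow> (real \<Rightarrow> real) \<Rightarrow> bool" where
  "Delta2 space_compact \<Phi> \<longleftrightarrow>
     (if space_compact
      then (\<exists>k>0. \<exists>x0>0. \<forall>x\<ge>x0. \<Phi> (2 * x) \<le> k * \<Phi> x)
      else (\<exists>k>0. \<forall>x\<ge>0. \<Phi> (2 * x) \<le> k * \<Phi> x))"

definition orlicz_space :: "'a measure \<Rightarrow> (real \<Rightarrow> real) \<Rightarrow> ('a \<Rightarrow> real) set" where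
  "orlicz_space M \<Phi> = {f. f \<in> borel_measurable M \<and>
      (\<exists>\<alpha>>0. (\<integral>\<^sup>+ x. ennreal (\<Phi> (\<alpha> * \<bar>f x\<bar>)) \<partial>M) < \<infinity>)}"

definition gauge_norm :: "'a measure \<Rightarrow> (real \<Rightarrow> real) \<Rightarrow> ('a \<Rightarrow> real) \<Rightarrow> real" where
  "gauge_norm M \<Phi> f = Inf {k. k > 0 \<and> (\<integral>\<^sup>+ x. ennreal (\<Phi> (\<bar>f x\<bar> / k)) \<partial>M) \<le> 1}"

definition E0 ::
  "('g \<Rightarrow> 'g \<Rightarrow> 'g) \<Rightarrow> ('g::topological_space \<Rightarrow> 'g) \<Rightarrow> ('g \<Rightarrow> 'g measure) \<Rightarrow> (real \<Rightarrow> real)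
     \<Rightarrow> ('g \<Rightarrow> ('g \<Rightarrow> real)) set" where
  "E0 gm gi lam \<Phi> = {\<xi>.
     (\<forall>u \<in> unit_space gm gi. \<xi> u \<in> orlicz_space (lam u) \<Phi>) \<and>
     (\<forall>u0 \<in> unit_space gm gi. \<forall>\<epsilon>>0. \<exists>f \<in> Cc. \<exists>V. open V \<and> u0 \<in> V \<and>
        (\<forall>v \<in> V \<inter> unit_space gm gi. gauge_norm (lam v) \<Phi> (\<lambda>x. \<xi> v x - f x) < \<epsilon>)) \<and>
     (\<forall>\<epsilon>>0. \<exists>K. compact K \<and> K \<subseteq> unit_space gm gi \<and>
        (\<forall>u \<in> unit_space gm gi - K. gauge_norm (lam u) \<Phi> (\<xi> u) < \<epsilon>))}"

definition E0_norm ::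
  "('g \<Rightarrow> 'g \<Rightarrow> 'g) \<Rightarrow> ('g \<Rightarrow> 'g) \<Rightarrow> ('g \<Rightarrow> 'g measure) \<Rightarrow> (real \<Rightarrow> real)
     \<Rightarrow> ('g \<Rightarrow> ('g \<Rightarrow> real)) \<Rightarrow> real" where
  "E0_norm gm gi lam \<Phi> \<xi> = (SUP u \<in> unit_space gm gi. gauge_norm (lam u) \<Phi> (\<xi> u))"

end

(*
  Under Delta_2 the functions of C_c(G) are dense in L^Phi(G^u), and shrinking an approximant
  slightly keeps its gauge norm strictly below k; this yields f_n in C_c(G) with
  ||g - f_n|| < 2^-(n+2) and ||f_n|| < k (or f_n = 0).  For f in C_c(G) the map
  v |-> int Phi(|f| / c) d lambda^v is continuous, so the strict bounds ||f_(n+1)|| < k and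
  ||f_(n+1) - f_n|| < 2^-n persist on neighbourhoods of u.  Choose open neighbourhoods W_n of u
  with compact closures, decreasing to u, and Urysohn functions phi_n equal to 1 on W_(n+1) and
  to 0 off W_n.  Put eta^u = g and, for v /= u, eta^v = sum_n (phi_(n-1)(v) - phi_n(v)) f_n
  with phi_(-1) = 1.  This is a convex combination, so ||eta^v|| <= k; on W_m only the f_n with
  n >= m occur, so eta is uniformly close to f_m there; away from u, eta is locally the
  restriction of the single function x |-> sum_n (phi_(n-1) - phi_n)(r(x)) f_n(x) of C_c(G).
*)

theory Submission
  imports Defs
begin

section \<open>N-functions, the modular and the gauge norm\<close>

lemma N_function_zero: "N_function \<Phi> \<Longrightarrow> \<Phi> 0 = 0"
  by (simp add: N_function_def)

lemma N_function_nonneg: "N_function \<Phi> \<Longrightarrow> 0 \<le> \<Phi> x"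
  by (simp add: N_function_def)

lemma N_function_pos: "N_function \<Phi> \<Longrightarrow> x \<noteq> 0 \<Longrightarrow> 0 < \<Phi> x"
  unfolding N_function_def by (metis order_le_less)

lemma N_function_continuous: "N_function \<Phi> \<Longrightarrow> continuous_on UNIV \<Phi>"
  by (simp add: N_function_def)

lemma N_function_borel_measurable: "N_function \<Phi> \<Longrightarrow> \<Phi> \<in> borel_measurable borel"
  by (simp add: borel_measurable_continuous_onI N_function_continuous)

lemma N_function_convex:
  assumes "N_function \<Phi>" "0 \<le> a" "0 \<le> b" "a + b = 1"
  shows "\<Phi> (a * x + b * y) \<le> a * \<Phi> x + b * \<Phi> y"
proof -
  have "convex_on UNIV \<Phi>"
    using assms(1) by (simp add: N_function_def)
  then show ?thesis
    using assms by (metis convex_onD diff_eq_eq iso_tuple_UNIV_I real_scaleR_def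
        le_add_same_cancel2)
qed

lemma N_function_mult_le:
  assumes "N_function \<Phi>" "0 \<le> t" "t \<le> 1"
  shows "\<Phi> (t * x) \<le> t * \<Phi> x"
  using N_function_convex[OF assms(1) assms(2), of "1 - t" x 0] assms
  by (simp add: N_function_zero)

lemma N_function_mono:
  assumes "N_function \<Phi>" "0 \<le> x" "x \<le> y"
  shows "\<Phi> x \<le> \<Phi> y"
proof (cases "y = 0")
  case True
  then show ?thesis using assms by simp
next
  case False
  then have y: "0 < y" using assms by simp
  have "\<Phi> x = \<Phi> ((x / y) * y)" using y by simp
  also have "\<dots> \<le> (x / y) * \<Phi> y"
    using N_function_mult_le[OF assms(1), of "x / y" y] assms y by simp
  also have "\<dots> \<le> 1 * \<Phi> y"
    using assms y N_function_nonneg[OF assms(1), of y] by (intro mult_right_mono) auto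
  finally show ?thesis by simp
qed

definition modular :: "'a measure \<Rightarrow> (real \<Rightarrow> real) \<Rightarrow> ('a \<Rightarrow> real) \<Rightarrow> real \<Rightarrow> ennreal" where
  "modular M \<Phi> h c = (\<integral>\<^sup>+ x. ennreal (\<Phi> (\<bar>h x\<bar> / c)) \<partial>M)"

lemma gauge_norm_eq_Inf_modular: "gauge_norm M \<Phi> h = Inf {c. 0 < c \<and> modular M \<Phi> h c \<le> 1}"
  unfolding gauge_norm_def modular_def ..

lemma modular_borel_measurable [measurable]:
  assumes "N_function \<Phi>" "h \<in> borel_measurable M"
  shows "(\<lambda>x. ennreal (\<Phi> (\<bar>h x\<bar> / c))) \<in> borel_measurable M"
  using N_function_borel_measurable[OF assms(1)] assms(2) by measurable

lemma modular_mult_le: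
  assumes "N_function \<Phi>" "h \<in> borel_measurable M" "0 < c" "c \<le> d"
  shows "modular M \<Phi> h d \<le> ennreal (c / d) * modular M \<Phi> h c"
proof -
  have "modular M \<Phi> h d \<le> (\<integral>\<^sup>+ x. ennreal (c / d) * ennreal (\<Phi> (\<bar>h x\<bar> / c)) \<partial>M)"
    unfolding modular_def
  proof (rule nn_integral_mono)
    fix x
    have "\<Phi> (\<bar>h x\<bar> / d) = \<Phi> ((c / d) * (\<bar>h x\<bar> / c))" using assms by simp
    also have "\<dots> \<le> (c / d) * \<Phi> (\<bar>h x\<bar> / c)"
      by (rule N_function_mult_le[OF assms(1)]) (use assms in auto)
    then show "ennreal (\<Phi> (\<bar>h x\<bar> / d)) \<le> ennreal (c / d) * ennreal (\<Phi> (\<bar>h x\<bar> / c))"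
      using assms N_function_nonneg[OF assms(1)]
      by (subst ennreal_mult[symmetric]) (auto intro: ennreal_leI)
  qed
  also have "\<dots> = ennreal (c / d) * modular M \<Phi> h c"
    unfolding modular_def by (simp add: nn_integral_cmult modular_borel_measurable[OF assms(1,2)])
  finally show ?thesis .
qed

lemma modular_Markov:
  assumes \<Phi>: "N_function \<Phi>" and "B \<in> sets M" "0 \<le> a" "\<And>x. x \<in> B \<Longrightarrow> a \<le> \<bar>h x\<bar>"
  shows "ennreal (\<Phi> a) * emeasure M B \<le> modular M \<Phi> h 1"
proof -
  have "ennreal (\<Phi> a) * emeasure M B = (\<integral>\<^sup>+x. ennreal (\<Phi> a) * indicator B x \<partial>M)"
    using nn_integral_cmult_indicator[OF assms(2)] by simp
  also have "\<dots> \<le> modular M \<Phi> h 1"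
    unfolding modular_def
  proof (rule nn_integral_mono)
    fix x
    show "ennreal (\<Phi> a) * indicator B x \<le> ennreal (\<Phi> (\<bar>h x\<bar> / 1))"
      using assms(3) assms(4)[of x] by (cases "x \<in> B") (simp_all add: N_function_mono[OF \<Phi>] ennreal_leI)
  qed
  finally show ?thesis .
qed

lemma orlicz_space_iff_modular:
  assumes "N_function \<Phi>"
  shows "h \<in> orlicz_space M \<Phi> \<longleftrightarrow> h \<in> borel_measurable M \<and> (\<exists>c>0. modular M \<Phi> h c \<le> 1)"
proof
  assume h: "h \<in> orlicz_space M \<Phi>"
  then obtain \<alpha> where hm: "h \<in> borel_measurable M" and \<alpha>: "0 < \<alpha>"
    and fin: "(\<integral>\<^sup>+ x. ennreal (\<Phi> (\<alpha> * \<bar>h x\<bar>)) \<partial>M) < \<infinity>"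
    by (auto simp: orlicz_space_def)
  have "modular M \<Phi> h (1 / \<alpha>) = (\<integral>\<^sup>+ x. ennreal (\<Phi> (\<alpha> * \<bar>h x\<bar>)) \<partial>M)"
    unfolding modular_def using \<alpha> by (simp add: mult.commute)
  define R where "R = enn2real (modular M \<Phi> h (1 / \<alpha>))"
  have R: "modular M \<Phi> h (1 / \<alpha>) = ennreal R" "0 \<le> R"
    using fin \<open>modular M \<Phi> h (1 / \<alpha>) = _\<close> unfolding R_def
    by (auto simp: ennreal_enn2real_if less_top)
  \<comment> \<open>Enlarging the scale by the factor R + 1 divides the modular by at least R + 1.\<close>
  have "modular M \<Phi> h ((1 / \<alpha>) * (R + 1)) \<le> ennreal (1 / (R + 1)) * ennreal R"
    using modular_mult_le[OF assms hm, of "1 / \<alpha>" "(1 / \<alpha>) * (R + 1)"] \<alpha> R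
    by (simp add: divide_right_mono)
  also have "\<dots> \<le> 1"
    using R by (simp add: ennreal_mult[symmetric])
  finally show "h \<in> borel_measurable M \<and> (\<exists>c>0. modular M \<Phi> h c \<le> 1)"
    using hm \<alpha> R by (intro conjI exI[of _ "(1 / \<alpha>) * (R + 1)"]) auto
next
  assume "h \<in> borel_measurable M \<and> (\<exists>c>0. modular M \<Phi> h c \<le> 1)"
  then obtain c where "h \<in> borel_measurable M" "0 < c" "modular M \<Phi> h c \<le> 1"
    by blast
  moreover have "modular M \<Phi> h c = (\<integral>\<^sup>+ x. ennreal (\<Phi> ((1 / c) * \<bar>h x\<bar>)) \<partial>M)"
    unfolding modular_def by simp
  ultimately show "h \<in> orlicz_space M \<Phi>"
    unfolding orlicz_space_def by (intro CollectI conjI exI[of _ "1 / c"]) (auto simp: le_less_trans)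
qed

lemma gauge_norm_le:
  assumes "0 < c" "modular M \<Phi> h c \<le> 1"
  shows "gauge_norm M \<Phi> h \<le> c"
  unfolding gauge_norm_eq_Inf_modular using assms by (intro cInf_lower bdd_belowI[of _ 0]) auto

lemma gauge_norm_nonneg:
  assumes "N_function \<Phi>" "h \<in> orlicz_space M \<Phi>"
  shows "0 \<le> gauge_norm M \<Phi> h"
  using assms unfolding gauge_norm_eq_Inf_modular orlicz_space_iff_modular[OF assms(1)]
  by (intro cInf_greatest) auto

lemma gauge_norm_lessE:
  assumes "N_function \<Phi>" "h \<in> orlicz_space M \<Phi>" "gauge_norm M \<Phi> h < d"
  obtains c where "0 < c" "c < d" "modular M \<Phi> h c \<le> 1"
proof -
  have "{c. 0 < c \<and> modular M \<Phi> h c \<le> 1} \<noteq> {}"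
    using assms(2) unfolding orlicz_space_iff_modular[OF assms(1)] by auto
  from cInf_lessD[OF this] assms(3) show ?thesis
    using that unfolding gauge_norm_eq_Inf_modular by auto
qed

lemma gauge_norm_cong_AE:
  assumes "AE x in M. h1 x = h2 x"
  shows "gauge_norm M \<Phi> h1 = gauge_norm M \<Phi> h2"
proof -
  have "modular M \<Phi> h1 c = modular M \<Phi> h2 c" for c
    unfolding modular_def by (rule nn_integral_cong_AE) (use assms in \<open>auto elim: eventually_mono\<close>)
  then show ?thesis
    unfolding gauge_norm_eq_Inf_modular by simp
qed

lemma modular_zero: "N_function \<Phi> \<Longrightarrow> modular M \<Phi> (\<lambda>x. 0) c = 0"
  unfolding modular_def by (simp add: N_function_zero)

lemma gauge_norm_zero:
  assumes "N_function \<Phi>"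
  shows "gauge_norm M \<Phi> (\<lambda>x. 0) = 0"
proof -
  have "{c. 0 < c \<and> modular M \<Phi> (\<lambda>x. 0) c \<le> 1} = {0<..}"
    by (auto simp: modular_zero[OF assms])
  then show ?thesis
    unfolding gauge_norm_eq_Inf_modular by simp
qed

lemma orlicz_space_zero: "N_function \<Phi> \<Longrightarrow> (\<lambda>x. 0) \<in> orlicz_space M \<Phi>"
  by (auto simp: orlicz_space_iff_modular modular_zero intro: exI[of _ 1])

lemma modular_add_le:
  assumes \<Phi>: "N_function \<Phi>" and [measurable]: "h1 \<in> borel_measurable M" "h2 \<in> borel_measurable M"
    and "0 < a" "0 < b"
  shows "modular M \<Phi> (\<lambda>x. h1 x + h2 x) (a + b) \<le>
           ennreal (a / (a + b)) * modular M \<Phi> h1 a + ennreal (b / (a + b)) * modular M \<Phi> h2 b"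
proof -
  have [measurable]: "\<Phi> \<in> borel_measurable borel"
    using N_function_borel_measurable[OF \<Phi>] .
  have pointwise: "\<Phi> (\<bar>h1 x + h2 x\<bar> / (a + b))
      \<le> a / (a + b) * \<Phi> (\<bar>h1 x\<bar> / a) + b / (a + b) * \<Phi> (\<bar>h2 x\<bar> / b)" for x
  proof -
    have "\<bar>h1 x + h2 x\<bar> / (a + b) \<le> a / (a + b) * (\<bar>h1 x\<bar> / a) + b / (a + b) * (\<bar>h2 x\<bar> / b)"
      using assms abs_triangle_ineq[of "h1 x" "h2 x"] by (simp add: add_divide_distrib[symmetric] divide_right_mono)
    then have "\<Phi> (\<bar>h1 x + h2 x\<bar> / (a + b)) \<le> \<Phi> (a / (a + b) * (\<bar>h1 x\<bar> / a) + b / (a + b) * (\<bar>h2 x\<bar> / b))"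
      using assms by (intro N_function_mono[OF \<Phi>]) auto
    also have "\<dots> \<le> a / (a + b) * \<Phi> (\<bar>h1 x\<bar> / a) + b / (a + b) * \<Phi> (\<bar>h2 x\<bar> / b)"
      using assms by (intro N_function_convex[OF \<Phi>]) (auto simp: add_divide_distrib[symmetric])
    finally show ?thesis .
  qed
  have "modular M \<Phi> (\<lambda>x. h1 x + h2 x) (a + b) \<le> (\<integral>\<^sup>+ x. ennreal (a / (a + b)) * ennreal (\<Phi> (\<bar>h1 x\<bar> / a))
      + ennreal (b / (a + b)) * ennreal (\<Phi> (\<bar>h2 x\<bar> / b)) \<partial>M)"
    unfolding modular_def
  proof (rule nn_integral_mono)
    fix x
    show "ennreal (\<Phi> (\<bar>h1 x + h2 x\<bar> / (a + b))) \<le> ennreal (a / (a + b)) * ennreal (\<Phi> (\<bar>h1 x\<bar> / a))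
      + ennreal (b / (a + b)) * ennreal (\<Phi> (\<bar>h2 x\<bar> / b))"
      using pointwise[of x] assms N_function_nonneg[OF \<Phi>]
      by (simp add: ennreal_mult'[symmetric] ennreal_plus[symmetric] del: ennreal_plus)
  qed
  also have "\<dots> = ennreal (a / (a + b)) * modular M \<Phi> h1 a + ennreal (b / (a + b)) * modular M \<Phi> h2 b"
    unfolding modular_def by (simp add: nn_integral_add nn_integral_cmult)
  finally show ?thesis .
qed

lemma modular_add_le_1:
  assumes "N_function \<Phi>" "h1 \<in> borel_measurable M" "h2 \<in> borel_measurable M"
    and "0 < a" "0 < b" "modular M \<Phi> h1 a \<le> 1" "modular M \<Phi> h2 b \<le> 1"
  shows "modular M \<Phi> (\<lambda>x. h1 x + h2 x) (a + b) \<le> 1"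
proof -
  have "modular M \<Phi> (\<lambda>x. h1 x + h2 x) (a + b) \<le>
           ennreal (a / (a + b)) * modular M \<Phi> h1 a + ennreal (b / (a + b)) * modular M \<Phi> h2 b"
    by (rule modular_add_le[OF assms(1-5)])
  also have "\<dots> \<le> ennreal (a / (a + b)) * 1 + ennreal (b / (a + b)) * 1"
    by (intro add_mono mult_left_mono) (use assms in auto)
  also have "\<dots> = ennreal (a / (a + b) + b / (a + b))"
    using assms by simp
  also have "\<dots> = 1"
    using assms by (simp add: add_divide_distrib[symmetric])
  finally show ?thesis .
qed

lemma orlicz_space_add:
  assumes "N_function \<Phi>" "h1 \<in> orlicz_space M \<Phi>" "h2 \<in> orlicz_space M \<Phi>"
  shows "(\<lambda>x. h1 x + h2 x) \<in> orlicz_space M \<Phi>"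
proof -
  obtain a b where a: "0 < a" "modular M \<Phi> h1 a \<le> 1" and b: "0 < b" "modular M \<Phi> h2 b \<le> 1"
    and m: "h1 \<in> borel_measurable M" "h2 \<in> borel_measurable M"
    using assms(2,3) unfolding orlicz_space_iff_modular[OF assms(1)] by blast
  have "modular M \<Phi> (\<lambda>x. h1 x + h2 x) (a + b) \<le> 1"
    by (rule modular_add_le_1[OF assms(1) m a(1) b(1) a(2) b(2)])
  moreover have "(\<lambda>x. h1 x + h2 x) \<in> borel_measurable M"
    using m by simp
  ultimately show ?thesis
    unfolding orlicz_space_iff_modular[OF assms(1)] using a(1) b(1) add_pos_pos by blast
qed

lemma gauge_norm_add_le:
  assumes "N_function \<Phi>" "h1 \<in> orlicz_space M \<Phi>" "h2 \<in> orlicz_space M \<Phi>"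
  shows "gauge_norm M \<Phi> (\<lambda>x. h1 x + h2 x) \<le> gauge_norm M \<Phi> h1 + gauge_norm M \<Phi> h2"
proof (rule field_le_epsilon)
  fix e :: real assume e: "0 < e"
  obtain a where a: "0 < a" "a < gauge_norm M \<Phi> h1 + e / 2" "modular M \<Phi> h1 a \<le> 1"
    by (rule gauge_norm_lessE[OF assms(1,2), of "gauge_norm M \<Phi> h1 + e / 2"]) (use e in auto)
  obtain b where b: "0 < b" "b < gauge_norm M \<Phi> h2 + e / 2" "modular M \<Phi> h2 b \<le> 1"
    by (rule gauge_norm_lessE[OF assms(1,3), of "gauge_norm M \<Phi> h2 + e / 2"]) (use e in auto)
  have m: "h1 \<in> borel_measurable M" "h2 \<in> borel_measurable M"
    using assms(2,3) by (simp_all add: orlicz_space_def)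
  have "gauge_norm M \<Phi> (\<lambda>x. h1 x + h2 x) \<le> a + b"
    using a b by (intro gauge_norm_le modular_add_le_1[OF assms(1) m]) auto
  then show "gauge_norm M \<Phi> (\<lambda>x. h1 x + h2 x) \<le> gauge_norm M \<Phi> h1 + gauge_norm M \<Phi> h2 + e"
    using a b by linarith
qed

lemma modular_cmult:
  assumes "a \<noteq> 0"
  shows "modular M \<Phi> (\<lambda>x. a * h x) (\<bar>a\<bar> * c) = modular M \<Phi> h c"
  unfolding modular_def using assms by (simp add: abs_mult)

lemma orlicz_space_cmult:
  assumes "N_function \<Phi>" "h \<in> orlicz_space M \<Phi>"
  shows "(\<lambda>x. a * h x) \<in> orlicz_space M \<Phi>"
proof (cases "a = 0")
  case True
  then show ?thesis using orlicz_space_zero[OF assms(1)] by simp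
next
  case False
  obtain c where "h \<in> borel_measurable M" "0 < c" "modular M \<Phi> h c \<le> 1"
    using assms(2) unfolding orlicz_space_iff_modular[OF assms(1)] by blast
  then show ?thesis
    unfolding orlicz_space_iff_modular[OF assms(1)] using False
    by (intro conjI exI[of _ "\<bar>a\<bar> * c"]) (simp_all add: modular_cmult)
qed

lemma gauge_norm_cmult_le:
  assumes "N_function \<Phi>" "h \<in> orlicz_space M \<Phi>"
  shows "gauge_norm M \<Phi> (\<lambda>x. a * h x) \<le> \<bar>a\<bar> * gauge_norm M \<Phi> h"
proof (cases "a = 0")
  case True
  then show ?thesis by (simp add: gauge_norm_zero[OF assms(1)])
next
  case False
  show ?thesis
  proof (rule field_le_epsilon)
    fix e :: real assume e: "0 < e"
    obtain c where c: "0 < c" "c < gauge_norm M \<Phi> h + e / \<bar>a\<bar>" "modular M \<Phi> h c \<le> 1"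
      by (rule gauge_norm_lessE[OF assms, of "gauge_norm M \<Phi> h + e / \<bar>a\<bar>"]) (use e False in auto)
    have "gauge_norm M \<Phi> (\<lambda>x. a * h x) \<le> \<bar>a\<bar> * c"
      using c False by (intro gauge_norm_le) (auto simp: modular_cmult)
    also have "\<dots> \<le> \<bar>a\<bar> * (gauge_norm M \<Phi> h + e / \<bar>a\<bar>)"
      using c by (intro mult_left_mono) auto
    also have "\<dots> = \<bar>a\<bar> * gauge_norm M \<Phi> h + e"
      using False by (simp add: algebra_simps)
    finally show "gauge_norm M \<Phi> (\<lambda>x. a * h x) \<le> \<bar>a\<bar> * gauge_norm M \<Phi> h + e" .
  qed
qed

lemma orlicz_space_diff:
  assumes "N_function \<Phi>" "h1 \<in> orlicz_space M \<Phi>" "h2 \<in> orlicz_space M \<Phi>"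
  shows "(\<lambda>x. h1 x - h2 x) \<in> orlicz_space M \<Phi>"
  using orlicz_space_add[OF assms(1,2) orlicz_space_cmult[OF assms(1,3), of "-1"]] by simp

lemma gauge_norm_diff_le:
  assumes "N_function \<Phi>" "h1 \<in> orlicz_space M \<Phi>" "h2 \<in> orlicz_space M \<Phi>"
  shows "gauge_norm M \<Phi> (\<lambda>x. h1 x - h2 x) \<le> gauge_norm M \<Phi> h1 + gauge_norm M \<Phi> h2"
  using gauge_norm_add_le[OF assms(1,2) orlicz_space_cmult[OF assms(1,3), of "-1"]]
    gauge_norm_cmult_le[OF assms(1,3), of "-1"]
  by simp

lemma orlicz_space_sum:
  assumes "N_function \<Phi>" "\<And>i. i \<in> S \<Longrightarrow> h i \<in> orlicz_space M \<Phi>"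
  shows "(\<lambda>x. \<Sum>i\<in>S. h i x) \<in> orlicz_space M \<Phi>"
  using assms(2)
  by (induction S rule: infinite_finite_induct)
     (auto simp: orlicz_space_zero[OF assms(1)] intro!: orlicz_space_add[OF assms(1)])

lemma gauge_norm_sum_le:
  assumes "N_function \<Phi>" "\<And>i. i \<in> S \<Longrightarrow> h i \<in> orlicz_space M \<Phi>"
  shows "gauge_norm M \<Phi> (\<lambda>x. \<Sum>i\<in>S. h i x) \<le> (\<Sum>i\<in>S. gauge_norm M \<Phi> (h i))"
  using assms(2)
proof (induction S rule: infinite_finite_induct)
  case (insert j S)
  have "gauge_norm M \<Phi> (\<lambda>x. h j x + (\<Sum>i\<in>S. h i x))
      \<le> gauge_norm M \<Phi> (h j) + gauge_norm M \<Phi> (\<lambda>x. \<Sum>i\<in>S. h i x)"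
    using insert.prems by (intro gauge_norm_add_le[OF assms(1)] orlicz_space_sum[OF assms(1)]) auto
  then show ?case
    using insert by simp
qed (simp_all add: gauge_norm_zero[OF assms(1)])

lemma gauge_norm_convex_combination_le:
  assumes "N_function \<Phi>" "finite S" "\<And>n. n \<in> S \<Longrightarrow> h n \<in> orlicz_space M \<Phi>"
    and "\<And>n. n \<in> S \<Longrightarrow> 0 \<le> w n" "(\<Sum>n\<in>S. w n) = 1"
    and "\<And>n. n \<in> S \<Longrightarrow> w n \<noteq> 0 \<Longrightarrow> gauge_norm M \<Phi> (h n) \<le> B"
  shows "gauge_norm M \<Phi> (\<lambda>x. \<Sum>n\<in>S. w n * h n x) \<le> B"
proof -
  have "gauge_norm M \<Phi> (\<lambda>x. \<Sum>n\<in>S. w n * h n x) \<le> (\<Sum>n\<in>S. gauge_norm M \<Phi> (\<lambda>x. w n * h n x))"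
    using assms by (intro gauge_norm_sum_le orlicz_space_cmult) auto
  also have "\<dots> \<le> (\<Sum>n\<in>S. w n * B)"
  proof (rule sum_mono)
    fix n assume n: "n \<in> S"
    have "gauge_norm M \<Phi> (\<lambda>x. w n * h n x) \<le> w n * gauge_norm M \<Phi> (h n)"
      using gauge_norm_cmult_le[OF assms(1) assms(3)[OF n], of "w n"] assms(4)[OF n] by simp
    also have "\<dots> \<le> w n * B"
      using assms(4)[OF n] assms(6)[OF n] by (cases "w n = 0") (auto intro: mult_left_mono)
    finally show "gauge_norm M \<Phi> (\<lambda>x. w n * h n x) \<le> w n * B" .
  qed
  also have "\<dots> = B"
    using assms(5) by (simp add: sum_distrib_right[symmetric])
  finally show ?thesis .
qed

lemma Hausdorff_space_euclidean_t2: "Hausdorff_space (euclidean :: 'a::t2_space topology)"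
  unfolding Hausdorff_space_def disjnt_def using hausdorff by fastforce

lemma compact_closure_subset:
  fixes S K :: "'a::t2_space set"
  assumes "S \<subseteq> K" "compact K"
  shows "compact (closure S)" "closure S \<subseteq> K"
proof -
  show "closure S \<subseteq> K"
    using assms by (simp add: closure_minimal compact_imp_closed)
  then show "compact (closure S)"
    using assms compact_Int_closed[of K "closure S"] by (simp add: Int_absorb1)
qed

lemma Cc_I:
  fixes f :: "'a::t2_space \<Rightarrow> real"
  assumes "continuous_on UNIV f" "{x. f x \<noteq> 0} \<subseteq> K" "compact K"
  shows "f \<in> Cc"
  unfolding Cc_def using assms compact_closure_subset(1)[OF assms(2,3)] by auto

lemma CcD:
  assumes "f \<in> Cc"
  shows "continuous_on UNIV f" "compact (closure {x. f x \<noteq> 0})"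
  using assms by (auto simp: Cc_def)

lemma locally_compact_Urysohn:
  fixes K U :: "'a::t2_space set"
  assumes lc: "locally_compact_space (euclidean :: 'a topology)"
    and "compact K" "open U" "K \<subseteq> U"
  obtains \<phi> where "\<phi> \<in> Cc" "\<And>x. 0 \<le> \<phi> x \<and> \<phi> x \<le> 1" "\<And>x. x \<in> K \<Longrightarrow> \<phi> x = 1"
    "\<And>x. x \<notin> U \<Longrightarrow> \<phi> x = 0"
proof -
  have crs: "completely_regular_space (euclidean :: 'a topology)"
    by (rule locally_compact_regular_imp_completely_regular_space[OF lc])
      (simp add: Hausdorff_space_euclidean_t2)
  have "\<exists>U L. openin euclidean U \<and> compactin euclidean L \<and> closedin euclidean L \<and> K \<subseteq> U \<and> U \<subseteq> L"
    using iffD1[OF locally_compact_space_compact_closed_compact[OF disjI1[OF Hausdorff_space_euclidean_t2]] lc]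
      \<open>compact K\<close> by simp
  then obtain U' L where UL: "open U'" "compact L" "K \<subseteq> U'" "U' \<subseteq> L"
    by auto
  have "closedin euclidean (- (U \<inter> U'))" "disjnt K (- (U \<inter> U'))"
    using assms UL by (auto simp: disjnt_def)
  then obtain f where f: "continuous_map euclidean (top_of_set {0..1}) f"
    "f ` (- (U \<inter> U')) \<subseteq> {0}" "f ` K \<subseteq> {1::real}"
    using Urysohn_completely_regular_compact_closed[of 0 1 euclidean K "- (U \<inter> U')", OF _ crs]
      \<open>compact K\<close> by auto
  have "continuous_on UNIV f" "\<And>x. f x \<in> {0..1}"
    using f(1) unfolding continuous_map_in_subtopology by auto
  moreover have "f \<in> Cc"
    using f(2) UL \<open>continuous_on UNIV f\<close> by (intro Cc_I[of _ L]) auto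
  ultimately show ?thesis
    by (intro that[of f]) (use f(2,3) in auto)
qed

lemma locally_compact_neighbourhood:
  fixes x :: "'a::t2_space"
  assumes "locally_compact_space (euclidean :: 'a topology)" "open U" "x \<in> U"
  obtains W where "open W" "x \<in> W" "compact (closure W)" "closure W \<subseteq> U"
proof -
  obtain \<phi> where \<phi>: "\<phi> \<in> Cc" "\<And>y. 0 \<le> \<phi> y \<and> \<phi> y \<le> 1" "\<And>y. y \<in> {x} \<Longrightarrow> \<phi> y = 1"
    "\<And>y. y \<notin> U \<Longrightarrow> \<phi> y = 0"
    using locally_compact_Urysohn[OF assms(1) compact_sing assms(2), of x] assms(3) by blast
  define W where "W = {y. 1 / 2 < \<phi> y}"
  have cont: "continuous_on UNIV \<phi>"
    using CcD(1)[OF \<phi>(1)] .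
  have "closure W \<subseteq> {y. 1 / 2 \<le> \<phi> y}"
    unfolding W_def by (intro closure_minimal closed_Collect_le[OF continuous_on_const cont]) auto
  also have "\<dots> \<subseteq> U \<inter> {y. \<phi> y \<noteq> 0}"
    using \<phi>(4) by fastforce
  finally have cl: "closure W \<subseteq> U \<inter> {y. \<phi> y \<noteq> 0}" .
  have "W \<subseteq> closure {y. \<phi> y \<noteq> 0}"
    using cl closure_subset[of W] closure_subset[of "{y. \<phi> y \<noteq> 0}"] by auto
  then have "compact (closure W)"
    by (rule compact_closure_subset(1)[OF _ CcD(2)[OF \<phi>(1)]])
  moreover have "open W"
    unfolding W_def by (rule open_Collect_less[OF continuous_on_const cont])
  moreover have "x \<in> W"
    using \<phi>(3) by (simp add: W_def)
  ultimately show ?thesis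
    using that cl by auto
qed

lemma open_Union_relatively_compact:
  fixes U :: "'a::{t2_space, second_countable_topology} set"
  assumes lc: "locally_compact_space (euclidean :: 'a topology)" and "open U"
  obtains V :: "nat \<Rightarrow> 'a set" and K :: "nat \<Rightarrow> 'a set"
  where "\<And>i. open (V i)" "\<And>i. compact (K i)" "\<And>i. V i \<subseteq> K i" "\<And>i. K i \<subseteq> U" "(\<Union>i. V i) = U"
proof (cases "U = {}")
  case True
  then show ?thesis
    using that[of "\<lambda>i. {}" "\<lambda>i. {}"] by auto
next
  case False
  define F where "F = {V. open V \<and> (\<exists>K. compact K \<and> V \<subseteq> K \<and> K \<subseteq> U)}"
  have UF: "\<Union>F = U"
  proof
    show "U \<subseteq> \<Union>F"
    proof
      fix x assume "x \<in> U"
      then obtain W where "open W" "x \<in> W" "compact (closure W)" "closure W \<subseteq> U"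
        using locally_compact_neighbourhood[OF lc \<open>open U\<close>] by blast
      then show "x \<in> \<Union>F"
        unfolding F_def using closure_subset by blast
    qed
  qed (auto simp: F_def)
  obtain F' where F': "F' \<subseteq> F" "countable F'" "\<Union>F' = \<Union>F"
    using Lindelof[of F] unfolding F_def by blast
  have "F' \<noteq> {}"
    using F' UF False by auto
  define V where "V = from_nat_into F'"
  have VF: "V i \<in> F" for i
    using from_nat_into[OF \<open>F' \<noteq> {}\<close>] F'(1) unfolding V_def by blast
  have "\<exists>K. compact K \<and> V i \<subseteq> K \<and> K \<subseteq> U" for i
    using VF[of i] unfolding F_def by blast
  then obtain K where K: "\<And>i. compact (K i)" "\<And>i. V i \<subseteq> K i" "\<And>i. K i \<subseteq> U"
    by metis
  have "range V = F'"
    unfolding V_def by (rule range_from_nat_into[OF \<open>F' \<noteq> {}\<close> F'(2)])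
  then have "(\<Union>i. V i) = U"
    using F'(3) UF by simp
  moreover have "\<And>i. open (V i)"
    using VF unfolding F_def by blast
  ultimately show ?thesis
    using that K by blast
qed

lemma continuous_on_range_map:
  assumes "topological_groupoid G2 gm gi"
  shows "continuous_on UNIV (range_map gm gi)"
proof -
  have mult: "continuous_on G2 (\<lambda>p. gm (fst p) (snd p))" and inv: "continuous_on UNIV gi"
    and "groupoid G2 gm gi"
    using assms by (auto simp: topological_groupoid_def)
  then have "(\<lambda>x. (x, gi x)) ` UNIV \<subseteq> G2"
    by (auto simp: groupoid_def)
  then have "continuous_on UNIV ((\<lambda>p. gm (fst p) (snd p)) \<circ> (\<lambda>x. (x, gi x)))"
    using inv by (intro continuous_on_compose continuous_intros continuous_on_subset[OF mult])
  then show ?thesis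
    by (simp add: range_map_def o_def)
qed

lemma range_map_unit:
  assumes "groupoid G2 gm gi" and "v \<in> unit_space gm gi"
  shows "range_map gm gi v = v"
proof -
  have assoc: "\<And>x y z. (x, y) \<in> G2 \<Longrightarrow> (y, z) \<in> G2 \<Longrightarrow>
      (gm x y, z) \<in> G2 \<and> (x, gm y z) \<in> G2 \<and> gm (gm x y) z = gm x (gm y z)"
    and inv_inv: "\<And>x. gi (gi x) = x" and composable_inv: "\<And>x. (x, gi x) \<in> G2"
    and cancel_left: "\<And>x y. (x, y) \<in> G2 \<Longrightarrow> gm (gi x) (gm x y) = y"
    and cancel_right: "\<And>x y. (x, y) \<in> G2 \<Longrightarrow> gm (gm x y) (gi y) = x"
    using assms(1) unfolding groupoid_def by blast+
  have inv_composable: "(gi x, x) \<in> G2" for x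
    using composable_inv[of "gi x"] inv_inv by simp
  obtain y where v: "v = gm y (gi y)"
    using assms(2) by (auto simp: unit_space_def range_map_def)
  have vy: "(v, y) \<in> G2" "gm v y = y"
    using assoc[OF composable_inv inv_composable, of y] cancel_right[OF composable_inv, of y] inv_inv v
    by simp_all
  have "gm (gi v) y = y"
    using cancel_left[OF vy(1)] vy(2) by simp
  then have left_unit: "gm (gi v) v = v"
    using assoc[OF _ composable_inv, of "gi v" y] assoc[OF inv_composable vy(1)] vy v by simp
  then have right_inv: "gm v (gi v) = gi v"
    using cancel_right[OF inv_composable, of v] by simp
  then have idem: "(v, v) \<in> G2" "gm v v = v"
    using assoc[OF composable_inv inv_composable, of v] left_unit by simp_all
  then have "gi v = v"
    using cancel_right[OF idem(1)] right_inv by simp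
  then show ?thesis
    using right_inv by (simp add: range_map_def)
qed

lemma unit_space_eq_fixpoints:
  assumes g: "groupoid G2 gm gi"
  shows "unit_space gm gi = {x. range_map gm gi x = x}"
proof
  show "unit_space gm gi \<subseteq> {x. range_map gm gi x = x}" using range_map_unit[OF g] by auto
  show "{x. range_map gm gi x = x} \<subseteq> unit_space gm gi" unfolding unit_space_def by (auto, metis rangeI)
qed

lemma closed_unit_space:
  fixes gm :: "'g::t2_space \<Rightarrow> 'g \<Rightarrow> 'g"
  assumes "topological_groupoid G2 gm gi"
  shows "closed (unit_space gm gi)"
proof -
  have g: "groupoid G2 gm gi" using assms by (simp add: topological_groupoid_def)
  show ?thesis unfolding unit_space_eq_fixpoints[OF g]
    by (rule closed_Collect_eq[OF continuous_on_range_map[OF assms] continuous_on_id])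
qed



lemma Cc_vanishing_with:
  fixes f g h :: "'a::t2_space \<Rightarrow> real"
  assumes "f \<in> Cc" "g \<in> Cc" "continuous_on UNIV h" "\<And>x. f x = 0 \<Longrightarrow> g x = 0 \<Longrightarrow> h x = 0"
  shows "h \<in> Cc"
proof (rule Cc_I[OF assms(3)])
  have "{x. h x \<noteq> 0} \<subseteq> {x. f x \<noteq> 0} \<union> {x. g x \<noteq> 0}"
    using assms(4) by blast
  also have "\<dots> \<subseteq> closure {x. f x \<noteq> 0} \<union> closure {x. g x \<noteq> 0}"
    by (intro Un_mono closure_subset)
  finally show "{x. h x \<noteq> 0} \<subseteq> closure {x. f x \<noteq> 0} \<union> closure {x. g x \<noteq> 0}" .
  show "compact (closure {x. f x \<noteq> 0} \<union> closure {x. g x \<noteq> 0})"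
    using CcD(2) assms(1,2) by blast
qed

lemma Cc_zero: "(\<lambda>x. 0 :: real) \<in> (Cc :: ('a::t2_space \<Rightarrow> real) set)"
  by (rule Cc_I[of _ "{}"]) auto

lemma Cc_add:
  fixes f g :: "'a::t2_space \<Rightarrow> real"
  assumes "f \<in> Cc" "g \<in> Cc"
  shows "(\<lambda>x. f x + g x) \<in> Cc"
  using assms CcD(1)[OF assms(1)] CcD(1)[OF assms(2)]
  by (intro Cc_vanishing_with[OF assms] continuous_intros) auto

lemma Cc_compose:
  fixes f :: "'a::t2_space \<Rightarrow> real"
  assumes "continuous_on UNIV \<psi>" "\<psi> 0 = 0" "f \<in> Cc"
  shows "(\<lambda>x. \<psi> (f x)) \<in> Cc"
  using assms continuous_on_compose2[OF assms(1) CcD(1)[OF assms(3)]]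
  by (intro Cc_vanishing_with[OF assms(3) assms(3)]) auto

lemma Cc_mult_continuous:
  fixes f :: "'a::t2_space \<Rightarrow> real"
  assumes "continuous_on UNIV \<psi>" "f \<in> Cc"
  shows "(\<lambda>x. \<psi> x * f x) \<in> Cc"
  using assms CcD(1)[OF assms(2)]
  by (intro Cc_vanishing_with[OF assms(2) assms(2)] continuous_intros) auto

lemma Cc_cmult: "f \<in> Cc \<Longrightarrow> (\<lambda>x. a * f x) \<in> (Cc :: ('a::t2_space \<Rightarrow> real) set)"
  using Cc_mult_continuous[of "\<lambda>x. a" f] by simp

lemma Cc_diff: "f \<in> Cc \<Longrightarrow> g \<in> Cc \<Longrightarrow> (\<lambda>x. f x - g x) \<in> (Cc :: ('a::t2_space \<Rightarrow> real) set)"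
  using Cc_add[of f "\<lambda>x. (-1) * g x"] Cc_cmult[of g "-1"] by simp

lemma Cc_sum:
  "(\<And>i. i \<in> S \<Longrightarrow> f i \<in> Cc) \<Longrightarrow> (\<lambda>x. \<Sum>i\<in>S. f i x) \<in> (Cc :: ('a::t2_space \<Rightarrow> real) set)"
  by (induction S rule: infinite_finite_induct) (auto simp: Cc_zero intro!: Cc_add)

lemma Cc_modular_integrand:
  fixes f :: "'a::t2_space \<Rightarrow> real"
  assumes "N_function \<Phi>" "f \<in> Cc"
  shows "(\<lambda>x. \<Phi> (\<bar>f x\<bar> / c)) \<in> Cc"
proof -
  have "continuous_on UNIV (\<lambda>t. inverse c * \<bar>t\<bar>)"
    by (intro continuous_intros)
  then have "continuous_on UNIV (\<lambda>t. \<Phi> (\<bar>t\<bar> / c))"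
    using continuous_on_compose2[OF N_function_continuous[OF assms(1)]]
    by (simp add: divide_inverse mult.commute)
  then show ?thesis
    using Cc_compose[OF _ _ assms(2), of "\<lambda>t. \<Phi> (\<bar>t\<bar> / c)"] N_function_zero[OF assms(1)] by simp
qed

lemma radon_measure_sets: "radon_measure M \<Longrightarrow> sets M = sets borel"
  by (simp add: radon_measure_def)

lemma radon_measure_space: "radon_measure M \<Longrightarrow> space M = UNIV"
  using sets_eq_imp_space_eq[OF radon_measure_sets] by simp

lemma radon_measure_compact_finite: "radon_measure M \<Longrightarrow> compact K \<Longrightarrow> emeasure M K < \<infinity>"
  by (simp add: radon_measure_def)

lemma radon_measure_continuous_measurable:
  "radon_measure M \<Longrightarrow> continuous_on UNIV f \<Longrightarrow> f \<in> borel_measurable M"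
  using measurable_cong_sets[OF radon_measure_sets[symmetric] refl, of M]
    borel_measurable_continuous_onI by blast

lemma integrable_Cc:
  fixes f :: "'a::t2_space \<Rightarrow> real"
  assumes M: "radon_measure M" and f: "f \<in> Cc"
  shows "integrable M f"
proof -
  let ?S = "closure {x. f x \<noteq> 0}"
  have S: "compact ?S" and cont: "continuous_on UNIV f"
    using CcD[OF f] by auto
  have "compact (f ` ?S)"
    by (rule compact_continuous_image[OF continuous_on_subset[OF cont] S]) auto
  then obtain B where B: "\<And>y. y \<in> f ` ?S \<Longrightarrow> norm y \<le> B"
    using compact_imp_bounded bounded_iff by metis
  show ?thesis
  proof (rule integrableI_bounded_set[where A = ?S and B = B])
    show "?S \<in> sets M"
      using radon_measure_sets[OF M] by simp
    show "f \<in> borel_measurable M"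
      by (rule radon_measure_continuous_measurable[OF M cont])
    show "emeasure M ?S < \<infinity>"
      by (rule radon_measure_compact_finite[OF M S])
    show "AE x\<in>?S in M. norm (f x) \<le> B"
      by (intro AE_I2 impI B imageI)
    show "AE x in M. x \<notin> ?S \<longrightarrow> f x = 0"
      using closure_subset[of "{x. f x \<noteq> 0}"] by (intro AE_I2) auto
  qed
qed

lemma nn_integral_Cc:
  fixes f :: "'a::t2_space \<Rightarrow> real"
  assumes "radon_measure M" "f \<in> Cc" "\<And>x. 0 \<le> f x"
  shows "(\<integral>\<^sup>+x. ennreal (f x) \<partial>M) = ennreal (integral\<^sup>L M f)"
  using nn_integral_eq_integral[OF integrable_Cc[OF assms(1,2)]] assms(3) by simp

lemma Cc_in_orlicz_space:
  fixes f :: "'a::t2_space \<Rightarrow> real"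
  assumes \<Phi>: "N_function \<Phi>" and M: "radon_measure M" and f: "f \<in> Cc"
  shows "f \<in> orlicz_space M \<Phi>"
proof -
  have "(\<integral>\<^sup>+ x. ennreal (\<Phi> (\<bar>f x\<bar> / 1)) \<partial>M) < \<infinity>"
    using nn_integral_Cc[OF M Cc_modular_integrand[OF \<Phi> f, of 1]] N_function_nonneg[OF \<Phi>] by simp
  then show ?thesis
    unfolding orlicz_space_def using radon_measure_continuous_measurable[OF M CcD(1)[OF f]]
    by (intro CollectI conjI exI[of _ 1]) auto
qed

lemma AE_in_measure_support:
  fixes M :: "'a::second_countable_topology measure"
  assumes "sets M = sets borel"
  shows "AE x in M. x \<in> measure_support M"
proof -
  define F where "F = {U. open U \<and> emeasure M U = 0}"
  obtain F' where F': "F' \<subseteq> F" "countable F'" "\<Union>F' = \<Union>F"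
    using Lindelof[of F] unfolding F_def by blast
  have "(\<Union>U\<in>F'. U) \<in> null_sets M"
  proof (rule null_sets_UN'[OF F'(2)])
    fix U assume "U \<in> F'"
    then have "open U" "emeasure M U = 0" using F' unfolding F_def by auto
    then show "U \<in> null_sets M" using assms by (auto simp: null_sets_def)
  qed
  moreover have "{x \<in> space M. x \<notin> measure_support M} \<subseteq> (\<Union>U\<in>F'. U)"
  proof
    fix x assume "x \<in> {x \<in> space M. x \<notin> measure_support M}"
    then obtain U where "open U" "x \<in> U" "\<not> emeasure M U > 0" unfolding measure_support_def by auto
    then have "U \<in> F" unfolding F_def by (auto simp: not_gr_zero)
    then show "x \<in> (\<Union>U\<in>F'. U)" using F' \<open>x \<in> U\<close> by auto
  qed
  ultimately show ?thesis by (rule AE_I')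
qed

lemma left_haar_system_radon:
  "left_haar_system G2 gm gi lam \<Longrightarrow> v \<in> unit_space gm gi \<Longrightarrow> radon_measure (lam v)"
  by (simp add: left_haar_system_def)

lemma left_haar_system_AE_range_fibre:
  fixes gm :: "'g::second_countable_topology \<Rightarrow> 'g \<Rightarrow> 'g"
  assumes "left_haar_system G2 gm gi lam" "v \<in> unit_space gm gi"
  shows "AE x in lam v. range_map gm gi x = v"
proof -
  have "measure_support (lam v) = range_fibre gm gi v" "radon_measure (lam v)"
    using assms by (auto simp: left_haar_system_def)
  then show ?thesis
    using AE_in_measure_support[OF radon_measure_sets, of "lam v"] by (simp add: range_fibre_def)
qed

text \<open>The modular of \<open>h\<close> at a fixed scale is the integral of a function in \<open>C\<^sub>c(G)\<close>, hence
  continuous on the unit space by the continuity axiom of the Haar system.\<close>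

lemma gauge_norm_Cc_upper_semicontinuous:
  fixes gm :: "'g::{t2_space, second_countable_topology} \<Rightarrow> 'g \<Rightarrow> 'g"
  assumes lhs: "left_haar_system G2 gm gi lam" and \<Phi>: "N_function \<Phi>"
    and h: "h \<in> Cc" and v0: "v0 \<in> unit_space gm gi" and less: "gauge_norm (lam v0) \<Phi> h < d"
  obtains V where "open V" "v0 \<in> V" "\<And>v. v \<in> V \<inter> unit_space gm gi \<Longrightarrow> gauge_norm (lam v) \<Phi> h < d"
proof -
  have h0: "h \<in> orlicz_space (lam v0) \<Phi>"
    by (rule Cc_in_orlicz_space[OF \<Phi> left_haar_system_radon[OF lhs v0] h])
  obtain c where c: "0 < c" "c < d" "modular (lam v0) \<Phi> h c \<le> 1"
    by (rule gauge_norm_lessE[OF \<Phi> h0 less])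
  define c' where "c' = (c + d) / 2"
  have c': "c < c'" "c' < d"
    using c unfolding c'_def by auto
  have "modular (lam v0) \<Phi> h c' \<le> ennreal (c / c') * modular (lam v0) \<Phi> h c"
    using h0 c c' by (intro modular_mult_le[OF \<Phi>]) (auto simp: orlicz_space_def)
  also have "\<dots> \<le> ennreal (c / c') * 1"
    using c by (intro mult_left_mono) auto
  also have "\<dots> < 1"
    using c c' by simp
  finally have "modular (lam v0) \<Phi> h c' < 1" .
  define J where "J = (\<lambda>v. integral\<^sup>L (lam v) (\<lambda>x. \<Phi> (\<bar>h x\<bar> / c')))"
  have modular_eq: "modular (lam v) \<Phi> h c' = ennreal (J v)" if "v \<in> unit_space gm gi" for v
    unfolding modular_def J_def using N_function_nonneg[OF \<Phi>]
    by (intro nn_integral_Cc left_haar_system_radon[OF lhs that] Cc_modular_integrand[OF \<Phi> h])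
  have "continuous_on (unit_space gm gi) J"
    using lhs Cc_modular_integrand[OF \<Phi> h] unfolding left_haar_system_def J_def by blast
  moreover have "J v0 \<in> {..<1}"
    using \<open>modular (lam v0) \<Phi> h c' < 1\<close> modular_eq[OF v0] by (simp add: ennreal_less_iff)
  ultimately obtain V where V: "open V" "v0 \<in> V" "\<And>v. v \<in> unit_space gm gi \<Longrightarrow> v \<in> V \<Longrightarrow> J v < 1"
    using v0 unfolding continuous_on_topological by (metis open_lessThan lessThan_iff)
  show ?thesis
  proof (rule that[OF V(1,2)])
    fix v assume v: "v \<in> V \<inter> unit_space gm gi"
    then have "J v < 1"
      using V(3) by blast
    then have "modular (lam v) \<Phi> h c' \<le> 1"
      using modular_eq v by (simp add: ennreal_leI)
    then have "gauge_norm (lam v) \<Phi> h \<le> c'"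
      using c c' by (intro gauge_norm_le) auto
    then show "gauge_norm (lam v) \<Phi> h < d"
      using c' by simp
  qed
qed

section \<open>Density of compactly supported functions in Orlicz spaces\<close>

text \<open>Approximation in modular at every scale, which is what dominated convergence provides;
  it implies approximation in gauge norm.\<close>

definition Cc_approximable :: "'a::t2_space measure \<Rightarrow> (real \<Rightarrow> real) \<Rightarrow> ('a \<Rightarrow> real) \<Rightarrow> bool" where
  "Cc_approximable M \<Phi> h \<longleftrightarrow> (\<forall>c>0. \<forall>\<delta>>0. \<exists>f\<in>Cc. modular M \<Phi> (\<lambda>x. h x - f x) c \<le> ennreal \<delta>)"

lemma modular_add_le_halves:
  assumes "N_function \<Phi>" "h1 \<in> borel_measurable M" "h2 \<in> borel_measurable M" "0 < c"
  shows "modular M \<Phi> (\<lambda>x. h1 x + h2 x) c \<le> modular M \<Phi> h1 (c / 2) + modular M \<Phi> h2 (c / 2)"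
proof -
  have "modular M \<Phi> (\<lambda>x. h1 x + h2 x) (c / 2 + c / 2) \<le>
      ennreal (1 / 2) * modular M \<Phi> h1 (c / 2) + ennreal (1 / 2) * modular M \<Phi> h2 (c / 2)"
    using modular_add_le[OF assms(1-3), of "c / 2" "c / 2"] assms(4) by simp
  also have "\<dots> \<le> 1 * modular M \<Phi> h1 (c / 2) + 1 * modular M \<Phi> h2 (c / 2)"
    using ennreal_leI[of "1 / 2 :: real" 1] by (intro add_mono mult_right_mono) simp_all
  finally show ?thesis
    by simp
qed

lemma Cc_approximable_Cc: "N_function \<Phi> \<Longrightarrow> f \<in> Cc \<Longrightarrow> Cc_approximable M \<Phi> f"
  unfolding Cc_approximable_def by (auto intro!: bexI[of _ f] simp: modular_zero)

lemma Cc_approximable_add: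
  assumes \<Phi>: "N_function \<Phi>" and M: "radon_measure M"
    and m: "h1 \<in> borel_measurable M" "h2 \<in> borel_measurable M"
    and "Cc_approximable M \<Phi> h1" "Cc_approximable M \<Phi> h2"
  shows "Cc_approximable M \<Phi> (\<lambda>x. h1 x + h2 x)"
  unfolding Cc_approximable_def
proof (intro allI impI)
  fix c \<delta> :: real assume c: "0 < c" and \<delta>: "0 < \<delta>"
  obtain f1 where f1: "f1 \<in> Cc" "modular M \<Phi> (\<lambda>x. h1 x - f1 x) (c / 2) \<le> ennreal (\<delta> / 2)"
    using assms(5) c \<delta> unfolding Cc_approximable_def by (meson half_gt_zero)
  obtain f2 where f2: "f2 \<in> Cc" "modular M \<Phi> (\<lambda>x. h2 x - f2 x) (c / 2) \<le> ennreal (\<delta> / 2)"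
    using assms(6) c \<delta> unfolding Cc_approximable_def by (meson half_gt_zero)
  have "f1 \<in> borel_measurable M" "f2 \<in> borel_measurable M"
    using radon_measure_continuous_measurable[OF M CcD(1)] f1 f2 by auto
  then have "modular M \<Phi> (\<lambda>x. (h1 x - f1 x) + (h2 x - f2 x)) c \<le>
      modular M \<Phi> (\<lambda>x. h1 x - f1 x) (c / 2) + modular M \<Phi> (\<lambda>x. h2 x - f2 x) (c / 2)"
    using m by (intro modular_add_le_halves[OF \<Phi> _ _ c]) auto
  also have "\<dots> \<le> ennreal (\<delta> / 2) + ennreal (\<delta> / 2)"
    using f1 f2 by (intro add_mono) auto
  also have "\<dots> = ennreal \<delta>"
    using \<delta> by (simp flip: ennreal_plus)
  finally have "modular M \<Phi> (\<lambda>x. (h1 x + h2 x) - (f1 x + f2 x)) c \<le> ennreal \<delta>"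
    by (simp add: algebra_simps)
  then show "\<exists>f\<in>Cc. modular M \<Phi> (\<lambda>x. h1 x + h2 x - f x) c \<le> ennreal \<delta>"
    using Cc_add[OF f1(1) f2(1)] by (intro bexI[of _ "\<lambda>x. f1 x + f2 x"]) simp_all
qed

lemma Cc_approximable_cmult:
  assumes \<Phi>: "N_function \<Phi>" and h: "Cc_approximable M \<Phi> h"
  shows "Cc_approximable M \<Phi> (\<lambda>x. a * h x)"
proof (cases "a = 0")
  case True
  then show ?thesis
    using Cc_approximable_Cc[OF \<Phi> Cc_zero] by simp
next
  case False
  show ?thesis
    unfolding Cc_approximable_def
  proof (intro allI impI)
    fix c \<delta> :: real assume c: "0 < c" and \<delta>: "0 < \<delta>"
    obtain f where f: "f \<in> Cc" "modular M \<Phi> (\<lambda>x. h x - f x) (c / \<bar>a\<bar>) \<le> ennreal \<delta>"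
      using h c \<delta> False unfolding Cc_approximable_def by (meson divide_pos_pos zero_less_abs_iff)
    have "modular M \<Phi> (\<lambda>x. a * h x - a * f x) c = modular M \<Phi> (\<lambda>x. h x - f x) (c / \<bar>a\<bar>)"
      using modular_cmult[OF False, of M \<Phi> "\<lambda>x. h x - f x" "c / \<bar>a\<bar>"] False
      by (simp add: right_diff_distrib)
    then show "\<exists>f\<in>Cc. modular M \<Phi> (\<lambda>x. a * h x - f x) c \<le> ennreal \<delta>"
      using f Cc_cmult[OF f(1), of a] by (intro bexI[of _ "\<lambda>x. a * f x"]) auto
  qed
qed

lemma Cc_approximable_sum:
  assumes "N_function \<Phi>" "radon_measure M"
    and "\<And>i. i \<in> S \<Longrightarrow> Cc_approximable M \<Phi> (h i) \<and> h i \<in> borel_measurable M"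
  shows "Cc_approximable M \<Phi> (\<lambda>x. \<Sum>i\<in>S. h i x)"
  using assms(3)
proof (induction S rule: infinite_finite_induct)
  case (insert j S)
  then have "Cc_approximable M \<Phi> (\<lambda>x. h j x + (\<Sum>i\<in>S. h i x))"
    by (intro Cc_approximable_add[OF assms(1,2)] borel_measurable_sum) auto
  then show ?case
    using insert by simp
qed (simp_all add: Cc_approximable_Cc[OF assms(1) Cc_zero])

lemma Cc_approximable_limit:
  assumes \<Phi>: "N_function \<Phi>" and M: "radon_measure M"
    and m: "h \<in> borel_measurable M" "\<And>n. hn n \<in> borel_measurable M"
    and approx: "\<And>n. Cc_approximable M \<Phi> (hn n)"
    and lim: "\<And>c. 0 < c \<Longrightarrow> (\<lambda>n. modular M \<Phi> (\<lambda>x. h x - hn n x) c) \<longlonglongrightarrow> 0"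
  shows "Cc_approximable M \<Phi> h"
  unfolding Cc_approximable_def
proof (intro allI impI)
  fix c \<delta> :: real assume c: "0 < c" and \<delta>: "0 < \<delta>"
  have "0 < ennreal (\<delta> / 2)"
    using \<delta> by simp
  from order_tendstoD(2)[OF lim[of "c / 2"] this] c
  obtain N where N: "modular M \<Phi> (\<lambda>x. h x - hn N x) (c / 2) < ennreal (\<delta> / 2)"
    by (auto dest: eventually_happens)
  obtain f where f: "f \<in> Cc" "modular M \<Phi> (\<lambda>x. hn N x - f x) (c / 2) \<le> ennreal (\<delta> / 2)"
    using approx[of N] c \<delta> unfolding Cc_approximable_def by (meson half_gt_zero)
  have "f \<in> borel_measurable M"
    using radon_measure_continuous_measurable[OF M CcD(1)[OF f(1)]] .
  then have "modular M \<Phi> (\<lambda>x. (h x - hn N x) + (hn N x - f x)) c \<le>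
      modular M \<Phi> (\<lambda>x. h x - hn N x) (c / 2) + modular M \<Phi> (\<lambda>x. hn N x - f x) (c / 2)"
    using m by (intro modular_add_le_halves[OF \<Phi> _ _ c]) auto
  also have "\<dots> \<le> ennreal (\<delta> / 2) + ennreal (\<delta> / 2)"
    using f N by (intro add_mono) auto
  also have "\<dots> = ennreal \<delta>"
    using \<delta> by (simp flip: ennreal_plus)
  finally show "\<exists>f\<in>Cc. modular M \<Phi> (\<lambda>x. h x - f x) c \<le> ennreal \<delta>"
    using f by auto
qed

lemma modular_dominated_convergence:
  assumes \<Phi>: "N_function \<Phi>" and "0 < c"
    and [measurable]: "h \<in> borel_measurable M" "\<And>n. hn n \<in> borel_measurable M" "w \<in> borel_measurable M"
    and bound: "\<And>n x. \<Phi> (\<bar>h x - hn n x\<bar> / c) \<le> w x"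
    and "(\<integral>\<^sup>+ x. ennreal (w x) \<partial>M) < \<infinity>"
    and conv: "\<And>x. (\<lambda>n. hn n x) \<longlonglongrightarrow> h x"
  shows "(\<lambda>n. modular M \<Phi> (\<lambda>x. h x - hn n x) c) \<longlonglongrightarrow> 0"
proof -
  have [measurable]: "\<Phi> \<in> borel_measurable borel"
    by (rule N_function_borel_measurable[OF \<Phi>])
  have "isCont \<Phi> 0"
    using N_function_continuous[OF \<Phi>] continuous_on_eq_continuous_at[OF open_UNIV] by blast
  have "(\<lambda>n. \<integral>\<^sup>+ x. ennreal (norm ((\<lambda>x. 0 :: real) x - (\<lambda>n x. \<Phi> (\<bar>h x - hn n x\<bar> / c)) n x)) \<partial>M)
      \<longlonglongrightarrow> 0"
  proof (rule nn_integral_dominated_convergence_norm[where w = w])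
    show "AE x in M. norm (\<Phi> (\<bar>h x - hn n x\<bar> / c)) \<le> w x" for n
      using bound N_function_nonneg[OF \<Phi>] by (intro AE_I2) simp
    show "AE x in M. (\<lambda>n. \<Phi> (\<bar>h x - hn n x\<bar> / c)) \<longlonglongrightarrow> 0"
    proof (intro AE_I2)
      fix x
      have "(\<lambda>n. \<bar>h x - hn n x\<bar> / c) \<longlonglongrightarrow> \<bar>h x - h x\<bar> / c"
        using \<open>0 < c\<close> by (intro tendsto_intros conv) auto
      then show "(\<lambda>n. \<Phi> (\<bar>h x - hn n x\<bar> / c)) \<longlonglongrightarrow> 0"
        using isCont_tendsto_compose[OF \<open>isCont \<Phi> 0\<close>] N_function_zero[OF \<Phi>] by fastforce
    qed
  qed (use assms in measurable)
  then show ?thesis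
    unfolding modular_def using N_function_nonneg[OF \<Phi>] by simp
qed

lemma Cc_approximable_bounded_limit:
  assumes \<Phi>: "N_function \<Phi>" and M: "radon_measure M"
    and A: "A \<in> sets M" "emeasure M A < \<infinity>"
    and m: "h \<in> borel_measurable M" "\<And>n. hn n \<in> borel_measurable M"
    and approx: "\<And>n. Cc_approximable M \<Phi> (hn n)"
    and outside: "\<And>n x. x \<notin> A \<Longrightarrow> hn n x = h x" and bounded: "\<And>n x. \<bar>h x - hn n x\<bar> \<le> 1"
    and conv: "\<And>x. (\<lambda>n. hn n x) \<longlonglongrightarrow> h x"
  shows "Cc_approximable M \<Phi> h"
proof (rule Cc_approximable_limit[OF \<Phi> M m approx])
  fix c :: real assume c: "0 < c"
  show "(\<lambda>n. modular M \<Phi> (\<lambda>x. h x - hn n x) c) \<longlonglongrightarrow> 0"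
  proof (rule modular_dominated_convergence[OF \<Phi> c m _ _ _ conv])
    show "(\<lambda>x. \<Phi> (1 / c) * indicator A x) \<in> borel_measurable M"
      using A by simp
    show "\<Phi> (\<bar>h x - hn n x\<bar> / c) \<le> \<Phi> (1 / c) * indicator A x" for n x
    proof (cases "x \<in> A")
      case True
      have "\<bar>h x - hn n x\<bar> / c \<le> 1 / c"
        using bounded[of x n] c by (simp add: divide_right_mono)
      then show ?thesis
        using True c by (simp add: N_function_mono[OF \<Phi>])
    qed (simp add: outside N_function_zero[OF \<Phi>])
    have "(\<integral>\<^sup>+ x. ennreal (\<Phi> (1 / c) * indicator A x) \<partial>M) = (\<integral>\<^sup>+ x. ennreal (\<Phi> (1 / c)) * indicator A x \<partial>M)"
      by (intro nn_integral_cong) (simp add: indicator_def)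
    also have "\<dots> = ennreal (\<Phi> (1 / c)) * emeasure M A"
      by (rule nn_integral_cmult_indicator[OF A(1)])
    finally have "(\<integral>\<^sup>+ x. ennreal (\<Phi> (1 / c) * indicator A x) \<partial>M) = ennreal (\<Phi> (1 / c)) * emeasure M A" .
    then show "(\<integral>\<^sup>+ x. ennreal (\<Phi> (1 / c) * indicator A x) \<partial>M) < \<infinity>"
      using A(2) by (simp add: ennreal_mult_less_top)
  qed
qed

lemma Cc_approximable_indicator_open:
  fixes M :: "'a::{t2_space, second_countable_topology} measure"
  assumes \<Phi>: "N_function \<Phi>" and M: "radon_measure M"
    and lc: "locally_compact_space (euclidean :: 'a topology)"
    and U: "open U" "emeasure M U < \<infinity>"
  shows "Cc_approximable M \<Phi> (indicator U)"
proof -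
  obtain V K :: "nat \<Rightarrow> 'a set" where VK: "\<And>i. open (V i)" "\<And>i. compact (K i)" "\<And>i. V i \<subseteq> K i"
    "\<And>i. K i \<subseteq> U" "(\<Union>i. V i) = U"
    using open_Union_relatively_compact[OF lc U(1)] by blast
  have "\<exists>\<phi>. \<phi> \<in> Cc \<and> (\<forall>x. 0 \<le> \<phi> x \<and> \<phi> x \<le> 1) \<and> (\<forall>x \<in> (\<Union>i<n. K i). \<phi> x = 1) \<and>
      (\<forall>x. x \<notin> U \<longrightarrow> \<phi> x = 0)" for n
  proof -
    have "compact (\<Union>i<n. K i)" "(\<Union>i<n. K i) \<subseteq> U"
      using VK(2,4) by auto
    from locally_compact_Urysohn[OF lc this(1) U(1) this(2)] show ?thesis
      by metis
  qed
  then obtain \<phi> where \<phi>: "\<And>n. \<phi> n \<in> Cc" "\<And>n x. 0 \<le> \<phi> n x \<and> \<phi> n x \<le> 1"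
    "\<And>n x. x \<in> (\<Union>i<n. K i) \<Longrightarrow> \<phi> n x = 1" "\<And>n x. x \<notin> U \<Longrightarrow> \<phi> n x = 0"
    by metis
  show ?thesis
  proof (rule Cc_approximable_bounded_limit[OF \<Phi> M _ U(2), where hn = \<phi>])
    show UM: "U \<in> sets M"
      using radon_measure_sets[OF M] U(1) by simp
    then show "indicator U \<in> borel_measurable M"
      by simp
    show "\<phi> n \<in> borel_measurable M" "Cc_approximable M \<Phi> (\<phi> n)" for n
      using \<phi>(1) by (simp_all add: radon_measure_continuous_measurable[OF M CcD(1)] Cc_approximable_Cc[OF \<Phi>])
    show "\<phi> n x = indicator U x" if "x \<notin> U" for n x
      using \<phi>(4) that by simp
    show "\<bar>indicator U x - \<phi> n x\<bar> \<le> 1" for n x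
      using \<phi>(2)[of n x] by (simp add: indicator_def)
    show "(\<lambda>n. \<phi> n x) \<longlonglongrightarrow> indicator U x" for x
    proof (cases "x \<in> U")
      case True
      then obtain i where "x \<in> K i"
        using VK(3,5) by blast
      then have "x \<in> (\<Union>i<n. K i)" if "Suc i \<le> n" for n
        using that by auto
      then have "\<forall>n\<ge>Suc i. \<phi> n x = indicator U x"
        using True \<phi>(3) by simp
      then show ?thesis
        by (intro tendsto_eventually) (auto simp: eventually_sequentially)
    qed (simp add: \<phi>(4))
  qed
qed

lemma Cc_approximable_indicator_disjoint_UN:
  fixes A :: "nat \<Rightarrow> 'a::t2_space set"
  assumes \<Phi>: "N_function \<Phi>" and M: "radon_measure M"
    and W: "W \<in> sets M" "emeasure M W < \<infinity>"
    and A: "disjoint_family A" "\<And>i. A i \<in> sets M" "\<And>i. Cc_approximable M \<Phi> (indicator (A i \<inter> W))"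
  shows "Cc_approximable M \<Phi> (indicator (\<Union>(range A) \<inter> W))"
proof -
  define hn where "hn n = (indicator (\<Union>i<n. A i \<inter> W) :: 'a \<Rightarrow> real)" for n
  have hn_sum: "hn n = (\<lambda>x. \<Sum>i<n. indicator (A i \<inter> W) x)" for n
  proof -
    have "disjoint_family_on (\<lambda>i. A i \<inter> W) {..<n}"
      using A(1) unfolding disjoint_family_on_def by auto
    then show ?thesis
      unfolding hn_def by (intro ext indicator_UN_disjoint) simp_all
  qed
  show ?thesis
  proof (rule Cc_approximable_bounded_limit[OF \<Phi> M W, where hn = hn])
    show "indicator (\<Union>(range A) \<inter> W) \<in> borel_measurable M"
      using A(2) W(1) by simp
    show "hn n \<in> borel_measurable M" for n
      unfolding hn_sum using A(2) W(1) by simp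
    show "Cc_approximable M \<Phi> (hn n)" for n
      unfolding hn_sum using A(2,3) W(1) by (intro Cc_approximable_sum[OF \<Phi> M]) simp
    show "hn n x = indicator (\<Union>(range A) \<inter> W) x" if "x \<notin> W" for n x
      using that by (simp add: hn_def indicator_def)
    show "\<bar>indicator (\<Union>(range A) \<inter> W) x - hn n x\<bar> \<le> 1" for n x
      by (simp add: hn_def indicator_def)
    show "(\<lambda>n. hn n x) \<longlonglongrightarrow> indicator (\<Union>(range A) \<inter> W) x" for x
      using LIMSEQ_indicator_UN[of "\<lambda>i. A i \<inter> W" x] by (simp add: hn_def)
  qed
qed

text \<open>Dynkin's \<open>\<pi>\<close>-\<open>\<lambda>\<close> argument, starting from the open sets.\<close>

lemma Cc_approximable_indicator_Int_open:
  fixes M :: "'a::{t2_space, second_countable_topology} measure"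
  assumes \<Phi>: "N_function \<Phi>" and M: "radon_measure M"
    and lc: "locally_compact_space (euclidean :: 'a topology)"
    and W: "open W" "emeasure M W < \<infinity>" and B: "B \<in> sets borel"
  shows "Cc_approximable M \<Phi> (indicator (B \<inter> W))"
proof -
  have WM: "W \<in> sets M"
    using radon_measure_sets[OF M] W by simp
  have sets_M: "A \<in> sigma_sets UNIV {S. open S} \<Longrightarrow> A \<in> sets M" for A
    by (simp only: radon_measure_sets[OF M] sets_borel)
  have open_case: "Cc_approximable M \<Phi> (indicator (A \<inter> W))" if "open A" for A
  proof (rule Cc_approximable_indicator_open[OF \<Phi> M lc])
    show "open (A \<inter> W)"
      using that W by auto
    have "emeasure M (A \<inter> W) \<le> emeasure M W"
      using WM by (intro emeasure_mono) auto
    then show "emeasure M (A \<inter> W) < \<infinity>"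
      using W by auto
  qed
  have "Int_stable {S :: 'a set. open S}" "{S :: 'a set. open S} \<subseteq> Pow UNIV"
    by (auto simp: Int_stable_def)
  moreover have "B \<in> sigma_sets UNIV {S. open S}"
    using B unfolding sets_borel .
  ultimately show ?thesis
  proof (induct rule: sigma_sets_induct_disjoint)
    case (basic A)
    then show ?case
      using open_case by simp
  next
    case empty
    show ?case
      using Cc_approximable_Cc[OF \<Phi> Cc_zero] by simp
  next
    case (compl A)
    have "A \<inter> W \<in> sets M"
      using sets_M[OF compl(1)] WM by simp
    then have "Cc_approximable M \<Phi> (\<lambda>x. indicator W x + (-1) * indicator (A \<inter> W) x)"
      using open_case[of UNIV] WM
      by (intro Cc_approximable_add[OF \<Phi> M] Cc_approximable_cmult[OF \<Phi> compl(2)]) simp_all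
    moreover have "indicator ((UNIV - A) \<inter> W) = (\<lambda>x. indicator W x + (-1) * indicator (A \<inter> W) x :: real)"
      by (auto simp: indicator_def)
    ultimately show ?case
      by simp
  next
    case (union A)
    then show ?case
      using sets_M by (intro Cc_approximable_indicator_disjoint_UN[OF \<Phi> M WM W(2)]) auto
  qed
qed

lemma Cc_approximable_indicator:
  fixes M :: "'a::{t2_space, second_countable_topology} measure"
  assumes \<Phi>: "N_function \<Phi>" and M: "radon_measure M"
    and lc: "locally_compact_space (euclidean :: 'a topology)"
    and B: "B \<in> sets M" "emeasure M B < \<infinity>"
  shows "Cc_approximable M \<Phi> (indicator B)"
proof -
  obtain V K :: "nat \<Rightarrow> 'a set" where VK: "\<And>i. open (V i)" "\<And>i. compact (K i)" "\<And>i. V i \<subseteq> K i" "\<And>i. K i \<subseteq> UNIV"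
    "(\<Union>i. V i) = UNIV"
    using open_Union_relatively_compact[OF lc open_UNIV] by blast
  define W where "W n = (\<Union>i<n. V i)" for n
  have W_open: "open (W n)" for n
    unfolding W_def using VK by auto
  have W_finite: "emeasure M (W n) < \<infinity>" for n
  proof -
    have "emeasure M (W n) \<le> emeasure M (\<Union>i<n. K i)"
      unfolding W_def using VK(2,3) radon_measure_sets[OF M] W_open[of n, unfolded W_def]
      by (intro emeasure_mono) (auto simp: compact_imp_closed compact_UN)
    also have "\<dots> < \<infinity>"
      using VK(2) by (intro radon_measure_compact_finite[OF M] compact_UN) auto
    finally show ?thesis .
  qed
  have BW: "B \<inter> W n \<in> sets M" for n
    using B(1) W_open radon_measure_sets[OF M] by simp
  show ?thesis
  proof (rule Cc_approximable_bounded_limit[OF \<Phi> M B, where hn = "\<lambda>n. indicator (B \<inter> W n)"])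
    show "indicator B \<in> borel_measurable M" "indicator (B \<inter> W n) \<in> borel_measurable M" for n
      using B(1) BW by simp_all
    have "B \<in> sets borel"
      using B radon_measure_sets[OF M] by simp
    then show "Cc_approximable M \<Phi> (indicator (B \<inter> W n))" for n
      by (rule Cc_approximable_indicator_Int_open[OF \<Phi> M lc W_open W_finite])
    show "indicator (B \<inter> W n) x = indicator B x" if "x \<notin> B" for n x
      using that by simp
    show "\<bar>indicator B x - indicator (B \<inter> W n) x :: real\<bar> \<le> 1" for n x
      by (simp add: indicator_def)
    show "(\<lambda>n. indicator (B \<inter> W n) x :: real) \<longlonglongrightarrow> indicator B x" for x
    proof -
      obtain i where "x \<in> V i"
        using VK(5) by blast
      then have "\<forall>n\<ge>Suc i. indicator (B \<inter> W n) x = (indicator B x :: real)"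
        unfolding W_def by (auto simp: indicator_def)
      then show ?thesis
        by (intro tendsto_eventually) (auto simp: eventually_sequentially)
    qed
  qed
qed

lemma Cc_approximable_simple_function:
  fixes M :: "'a::{t2_space, second_countable_topology} measure"
  assumes \<Phi>: "N_function \<Phi>" and M: "radon_measure M"
    and lc: "locally_compact_space (euclidean :: 'a topology)"
    and s: "simple_function M s" and finite: "\<And>y. y \<noteq> 0 \<Longrightarrow> emeasure M (s -` {y} \<inter> space M) < \<infinity>"
  shows "Cc_approximable M \<Phi> s"
proof -
  have space: "space M = UNIV"
    by (rule radon_measure_space[OF M])
  define B where "B y = s -` {y} \<inter> space M" for y
  have BM: "B y \<in> sets M" for y
    unfolding B_def by (rule simple_functionD(2)[OF s])
  have "s = (\<lambda>x. \<Sum>y\<in>s ` space M. y * indicator (B y) x)"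
  proof
    fix x
    have "(\<Sum>y\<in>s ` space M. y * indicator (B y) x) = (\<Sum>y\<in>s ` space M. if y = s x then s x else 0)"
      by (rule sum.cong) (auto simp: B_def indicator_def space)
    also have "\<dots> = s x"
      using simple_functionD(1)[OF s] by (simp add: space)
    finally show "s x = (\<Sum>y\<in>s ` space M. y * indicator (B y) x)"
      by simp
  qed
  moreover have "Cc_approximable M \<Phi> (\<lambda>x. \<Sum>y\<in>s ` space M. y * indicator (B y) x)"
  proof (rule Cc_approximable_sum[OF \<Phi> M])
    fix y
    show "Cc_approximable M \<Phi> (\<lambda>x. y * indicator (B y) x) \<and> (\<lambda>x. y * indicator (B y) x) \<in> borel_measurable M"
    proof (cases "y = 0")
      case True
      then show ?thesis
        using Cc_approximable_Cc[OF \<Phi> Cc_zero] by simp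
    next
      case False
      then show ?thesis
        using Cc_approximable_cmult[OF \<Phi> Cc_approximable_indicator[OF \<Phi> M lc BM]] finite BM
        by (simp add: B_def)
    qed
  qed
  ultimately show ?thesis
    by simp
qed

lemma Cc_approximable_modular_finite:
  fixes M :: "'a::{t2_space, second_countable_topology} measure"
  assumes \<Phi>: "N_function \<Phi>" and M: "radon_measure M"
    and lc: "locally_compact_space (euclidean :: 'a topology)"
    and hm: "h \<in> borel_measurable M" and finite: "\<And>c. 0 < c \<Longrightarrow> modular M \<Phi> h c < \<infinity>"
  shows "Cc_approximable M \<Phi> h"
proof -
  obtain F where F: "\<And>i. simple_function M (F i)" "\<And>x. (\<lambda>i. F i x) \<longlonglongrightarrow> h x"
    "\<And>i x. dist (F i x) 0 \<le> 2 * dist (h x) 0"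
    using borel_measurable_implies_sequence_metric[OF hm, of 0] radon_measure_space[OF M] by auto
  have F_bound: "\<bar>F i x\<bar> \<le> 2 * \<bar>h x\<bar>" for i x
    using F(3)[of i x] by simp
  have F_measurable: "F i \<in> borel_measurable M" for i
    using F(1) by (rule borel_measurable_simple_function)
  have [measurable]: "\<Phi> \<in> borel_measurable borel"
    by (rule N_function_borel_measurable[OF \<Phi>])
  have "emeasure M (F i -` {y} \<inter> space M) < \<infinity>" if "y \<noteq> 0" for i y
  proof -
    have "ennreal (\<Phi> (\<bar>y\<bar> / 2)) * emeasure M (F i -` {y} \<inter> space M) \<le> modular M \<Phi> h 1"
    proof (rule modular_Markov[OF \<Phi>])
      show "F i -` {y} \<inter> space M \<in> sets M"
        using F_measurable[of i] by (simp add: measurable_sets)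
      show "\<bar>y\<bar> / 2 \<le> \<bar>h x\<bar>" if "x \<in> F i -` {y} \<inter> space M" for x
        using F_bound[of i x] that by simp
    qed simp
    also have "\<dots> < \<infinity>"
      using finite[of 1] by simp
    finally show ?thesis
      using N_function_pos[OF \<Phi>, of "\<bar>y\<bar> / 2"] that by (auto simp: ennreal_mult_less_top)
  qed
  then have "Cc_approximable M \<Phi> (F i)" for i
    by (intro Cc_approximable_simple_function[OF \<Phi> M lc F(1)])
  then show ?thesis
  proof (rule Cc_approximable_limit[OF \<Phi> M hm F_measurable])
    fix c :: real assume c: "0 < c"
    show "(\<lambda>n. modular M \<Phi> (\<lambda>x. h x - F n x) c) \<longlonglongrightarrow> 0"
    proof (rule modular_dominated_convergence[OF \<Phi> c hm F_measurable _ _ _ F(2)])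
      show "(\<lambda>x. \<Phi> (\<bar>h x\<bar> / (c / 3))) \<in> borel_measurable M"
        using hm by measurable
      show "\<Phi> (\<bar>h x - F n x\<bar> / c) \<le> \<Phi> (\<bar>h x\<bar> / (c / 3))" for n x
      proof (rule N_function_mono[OF \<Phi>])
        have "\<bar>h x - F n x\<bar> \<le> 3 * \<bar>h x\<bar>"
          using F_bound[of n x] by linarith
        then show "\<bar>h x - F n x\<bar> / c \<le> \<bar>h x\<bar> / (c / 3)"
          using c by (simp add: divide_right_mono)
      qed (use c in simp)
      show "(\<integral>\<^sup>+ x. ennreal (\<Phi> (\<bar>h x\<bar> / (c / 3))) \<partial>M) < \<infinity>"
        using finite[of "c / 3"] c by (simp add: modular_def)
    qed
  qed
qed

lemma Delta2_affine_bound: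
  assumes \<Phi>: "N_function \<Phi>" and "Delta2 (compact (UNIV :: 'a::topological_space set)) \<Phi>"
  obtains K C where "1 \<le> K" "0 \<le> C" "\<And>x. 0 \<le> x \<Longrightarrow> \<Phi> (2 * x) \<le> K * \<Phi> x + C"
    "C = 0 \<or> compact (UNIV :: 'a set)"
proof (cases "compact (UNIV :: 'a set)")
  case True
  then obtain k x0 where k: "0 < x0" "\<And>x. x0 \<le> x \<Longrightarrow> \<Phi> (2 * x) \<le> k * \<Phi> x"
    using assms(2) by (auto simp: Delta2_def)
  show ?thesis
  proof (rule that[of "max k 1" "\<Phi> (2 * x0)"])
    fix x :: real assume x: "0 \<le> x"
    show "\<Phi> (2 * x) \<le> max k 1 * \<Phi> x + \<Phi> (2 * x0)"
    proof (cases "x0 \<le> x")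
      case True
      then have "\<Phi> (2 * x) \<le> max k 1 * \<Phi> x"
        using k(2)[of x] N_function_nonneg[OF \<Phi>, of x] by (smt (verit) mult_right_mono max.cobounded1)
      then show ?thesis
        using N_function_nonneg[OF \<Phi>, of "2 * x0"] by linarith
    next
      case False
      then have "\<Phi> (2 * x) \<le> \<Phi> (2 * x0)"
        using x by (intro N_function_mono[OF \<Phi>]) auto
      then show ?thesis
        using N_function_nonneg[OF \<Phi>, of x] by (smt (verit) max.cobounded2 mult_nonneg_nonneg)
    qed
  qed (use True N_function_nonneg[OF \<Phi>] in auto)
next
  case False
  then obtain k where k: "\<And>x. 0 \<le> x \<Longrightarrow> \<Phi> (2 * x) \<le> k * \<Phi> x"
    using assms(2) by (auto simp: Delta2_def)
  show ?thesis
  proof (rule that[of "max k 1" 0])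
    fix x :: real assume x: "0 \<le> x"
    show "\<Phi> (2 * x) \<le> max k 1 * \<Phi> x + 0"
      using k[OF x] N_function_nonneg[OF \<Phi>, of x] by (smt (verit) mult_right_mono max.cobounded1)
  qed auto
qed

lemma Delta2_iterate:
  assumes \<Phi>: "N_function \<Phi>" and "1 \<le> K" "0 \<le> C"
    and step: "\<And>x. 0 \<le> x \<Longrightarrow> \<Phi> (2 * x) \<le> K * \<Phi> x + C" and x: "0 \<le> x"
  shows "\<Phi> (2 ^ m * x) \<le> K ^ m * (\<Phi> x + real m * C)"
proof (induction m)
  case (Suc m)
  have "\<Phi> (2 ^ Suc m * x) = \<Phi> (2 * (2 ^ m * x))"
    by (simp add: mult.assoc)
  also have "\<dots> \<le> K * \<Phi> (2 ^ m * x) + C"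
    using step x by simp
  also have "\<dots> \<le> K * (K ^ m * (\<Phi> x + real m * C)) + C"
    using Suc assms(2) by (intro add_right_mono mult_left_mono) auto
  also have "\<dots> \<le> K ^ Suc m * (\<Phi> x + real (Suc m) * C)"
  proof -
    have "C \<le> K ^ Suc m * C"
      using mult_right_mono[OF one_le_power[OF assms(2)] assms(3), of "Suc m"] by simp
    then show ?thesis
      by (simp add: algebra_simps)
  qed
  finally show ?case .
qed simp

lemma Delta2_rescale:
  assumes \<Phi>: "N_function \<Phi>" and KC: "1 \<le> K" "0 \<le> C" "\<And>x. 0 \<le> x \<Longrightarrow> \<Phi> (2 * x) \<le> K * \<Phi> x + C"
    and "0 < c" "0 < \<alpha>"
  obtains m :: nat where "\<And>t. 0 \<le> t \<Longrightarrow> \<Phi> (t / c) \<le> K ^ m * (\<Phi> (\<alpha> * t) + real m * C)"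
proof -
  obtain m :: nat where m: "1 / (c * \<alpha>) < 2 ^ m"
    using real_arch_pow[of 2 "1 / (c * \<alpha>)"] by auto
  have "\<Phi> (t / c) \<le> K ^ m * (\<Phi> (\<alpha> * t) + real m * C)" if "0 \<le> t" for t
  proof -
    have "1 / c \<le> 2 ^ m * \<alpha>"
      using m assms(5,6) by (simp add: field_simps)
    then have "t / c \<le> 2 ^ m * (\<alpha> * t)"
      using mult_right_mono[of "1 / c" "2 ^ m * \<alpha>" t] that by (simp add: mult.assoc)
    then have "\<Phi> (t / c) \<le> \<Phi> (2 ^ m * (\<alpha> * t))"
      using that assms(5) by (intro N_function_mono[OF \<Phi>]) auto
    also have "\<dots> \<le> K ^ m * (\<Phi> (\<alpha> * t) + real m * C)"
      using Delta2_iterate[OF \<Phi> KC, of "\<alpha> * t" m] that assms(6) by simp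
    finally show ?thesis .
  qed
  then show ?thesis
    using that by blast
qed

lemma Delta2_modular_finite:
  fixes M :: "'a::t2_space measure"
  assumes \<Phi>: "N_function \<Phi>" and M: "radon_measure M"
    and D: "Delta2 (compact (UNIV :: 'a set)) \<Phi>" and h: "h \<in> orlicz_space M \<Phi>" and c: "0 < c"
  shows "modular M \<Phi> h c < \<infinity>"
proof -
  have [measurable]: "\<Phi> \<in> borel_measurable borel"
    by (rule N_function_borel_measurable[OF \<Phi>])
  obtain K C where KC: "1 \<le> K" "0 \<le> C" "\<And>x. 0 \<le> x \<Longrightarrow> \<Phi> (2 * x) \<le> K * \<Phi> x + C"
    and C: "C = 0 \<or> compact (UNIV :: 'a set)"
    using Delta2_affine_bound[OF \<Phi> D] by blast
  from h obtain \<alpha> where hm [measurable]: "h \<in> borel_measurable M" and \<alpha>: "0 < \<alpha>"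
    and finite: "(\<integral>\<^sup>+ x. ennreal (\<Phi> (\<alpha> * \<bar>h x\<bar>)) \<partial>M) < \<infinity>"
    by (auto simp: orlicz_space_def)
  obtain m where bound: "\<And>t. 0 \<le> t \<Longrightarrow> \<Phi> (t / c) \<le> K ^ m * (\<Phi> (\<alpha> * t) + real m * C)"
    using Delta2_rescale[OF \<Phi> KC c \<alpha>] by blast
  have "modular M \<Phi> h c \<le> (\<integral>\<^sup>+ x. ennreal (K ^ m) * (ennreal (\<Phi> (\<alpha> * \<bar>h x\<bar>)) + ennreal (real m * C)) \<partial>M)"
    unfolding modular_def
  proof (rule nn_integral_mono)
    fix x
    have "ennreal (\<Phi> (\<bar>h x\<bar> / c)) \<le> ennreal (K ^ m * (\<Phi> (\<alpha> * \<bar>h x\<bar>) + real m * C))"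
      using bound[of "\<bar>h x\<bar>"] by (simp add: ennreal_leI)
    then show "ennreal (\<Phi> (\<bar>h x\<bar> / c)) \<le> ennreal (K ^ m) * (ennreal (\<Phi> (\<alpha> * \<bar>h x\<bar>)) + ennreal (real m * C))"
      using KC N_function_nonneg[OF \<Phi>] by (simp add: ennreal_mult ennreal_plus)
  qed
  also have "\<dots> = ennreal (K ^ m) * ((\<integral>\<^sup>+ x. ennreal (\<Phi> (\<alpha> * \<bar>h x\<bar>)) \<partial>M) + ennreal (real m * C) * emeasure M (space M))"
    by (simp add: nn_integral_cmult nn_integral_add)
  also have "\<dots> < \<infinity>"
  proof -
    have "ennreal (real m * C) * emeasure M (space M) < \<infinity>"
      using C radon_measure_compact_finite[OF M] radon_measure_space[OF M]
      by (auto simp: ennreal_mult_less_top)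
    then show ?thesis
      using finite by (simp add: ennreal_mult_less_top)
  qed
  finally show ?thesis .
qed

theorem Cc_dense_orlicz_space:
  fixes M :: "'a::{t2_space, second_countable_topology} measure"
  assumes \<Phi>: "N_function \<Phi>" and M: "radon_measure M"
    and lc: "locally_compact_space (euclidean :: 'a topology)"
    and D: "Delta2 (compact (UNIV :: 'a set)) \<Phi>" and h: "h \<in> orlicz_space M \<Phi>" and "0 < \<epsilon>"
  obtains f where "f \<in> Cc" "gauge_norm M \<Phi> (\<lambda>x. h x - f x) < \<epsilon>"
proof -
  have "h \<in> borel_measurable M"
    using h by (simp add: orlicz_space_def)
  then have "Cc_approximable M \<Phi> h"
    using Delta2_modular_finite[OF \<Phi> M D h] by (intro Cc_approximable_modular_finite[OF \<Phi> M lc])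
  then obtain f where f: "f \<in> Cc" "modular M \<Phi> (\<lambda>x. h x - f x) (\<epsilon> / 2) \<le> ennreal 1"
    unfolding Cc_approximable_def using \<open>0 < \<epsilon>\<close> by (meson half_gt_zero zero_less_one)
  then have "gauge_norm M \<Phi> (\<lambda>x. h x - f x) \<le> \<epsilon> / 2"
    using \<open>0 < \<epsilon>\<close> by (intro gauge_norm_le) auto
  then show ?thesis
    using that f(1) \<open>0 < \<epsilon>\<close> by simp
qed

lemma gauge_norm_shrunk_approximant:
  assumes \<Phi>: "N_function \<Phi>" and h: "h \<in> orlicz_space M \<Phi>" and f0: "f0 \<in> orlicz_space M \<Phi>"
    and hk: "gauge_norm M \<Phi> h \<le> k" and k: "0 < k" and \<delta>: "0 < \<delta>"
    and close: "gauge_norm M \<Phi> (\<lambda>x. h x - f0 x) < \<delta>"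
  defines "s \<equiv> k / (k + 2 * \<delta>)"
  shows "gauge_norm M \<Phi> (\<lambda>x. s * f0 x) < k" "gauge_norm M \<Phi> (\<lambda>x. h x - s * f0 x) < 3 * \<delta>"
proof -
  have diff: "(\<lambda>x. h x - f0 x) \<in> orlicz_space M \<Phi>"
    by (rule orlicz_space_diff[OF \<Phi> h f0])
  have "gauge_norm M \<Phi> (\<lambda>x. h x - (h x - f0 x)) \<le> gauge_norm M \<Phi> h + gauge_norm M \<Phi> (\<lambda>x. h x - f0 x)"
    by (rule gauge_norm_diff_le[OF \<Phi> h diff])
  then have f0_norm: "gauge_norm M \<Phi> f0 < k + \<delta>"
    using close hk by simp
  have s: "0 < s" "s < 1"
    using k \<delta> by (auto simp: s_def)
  have "gauge_norm M \<Phi> (\<lambda>x. s * f0 x) \<le> s * gauge_norm M \<Phi> f0"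
    using gauge_norm_cmult_le[OF \<Phi> f0, of s] s by simp
  also have "\<dots> < s * (k + \<delta>)"
    using f0_norm s by simp
  also have "\<dots> < k"
    using k \<delta> by (simp add: s_def field_simps)
  finally show "gauge_norm M \<Phi> (\<lambda>x. s * f0 x) < k" .
  have "(\<lambda>x. h x - s * f0 x) = (\<lambda>x. (h x - f0 x) + (1 - s) * f0 x)"
    by (auto simp: algebra_simps)
  then have "gauge_norm M \<Phi> (\<lambda>x. h x - s * f0 x)
      \<le> gauge_norm M \<Phi> (\<lambda>x. h x - f0 x) + gauge_norm M \<Phi> (\<lambda>x. (1 - s) * f0 x)"
    using gauge_norm_add_le[OF \<Phi> diff orlicz_space_cmult[OF \<Phi> f0]] by simp
  also have "\<dots> \<le> gauge_norm M \<Phi> (\<lambda>x. h x - f0 x) + (1 - s) * gauge_norm M \<Phi> f0"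
    using gauge_norm_cmult_le[OF \<Phi> f0, of "1 - s"] s by simp
  also have "\<dots> < \<delta> + (1 - s) * (k + \<delta>)"
    using close f0_norm s by (intro add_strict_mono) auto
  also have "(1 - s) * (k + \<delta>) = 2 * \<delta> * ((k + \<delta>) / (k + 2 * \<delta>))"
    using k \<delta> by (simp add: s_def field_simps)
  also have "\<dots> \<le> 2 * \<delta>"
    using mult_left_le[of "(k + \<delta>) / (k + 2 * \<delta>)" "2 * \<delta>"] k \<delta> by simp
  finally show "gauge_norm M \<Phi> (\<lambda>x. h x - s * f0 x) < 3 * \<delta>"
    by simp
qed

lemma Cc_approx_inside_gauge_ball:
  fixes M :: "'a::{t2_space, second_countable_topology} measure"
  assumes \<Phi>: "N_function \<Phi>" and M: "radon_measure M"
    and lc: "locally_compact_space (euclidean :: 'a topology)"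
    and D: "Delta2 (compact (UNIV :: 'a set)) \<Phi>"
    and h: "h \<in> orlicz_space M \<Phi>" and hk: "gauge_norm M \<Phi> h \<le> k" and \<epsilon>: "0 < \<epsilon>"
  obtains f where "f \<in> Cc" "gauge_norm M \<Phi> (\<lambda>x. h x - f x) < \<epsilon>"
    "f = (\<lambda>x. 0) \<or> gauge_norm M \<Phi> f < k"
proof (cases "gauge_norm M \<Phi> h < \<epsilon>")
  case True
  then show ?thesis
    using that[OF Cc_zero] by simp
next
  case False
  then have "0 < k"
    using \<epsilon> hk by linarith
  have "0 < \<epsilon> / 3"
    using \<epsilon> by simp
  then obtain f0 where f0: "f0 \<in> Cc" "gauge_norm M \<Phi> (\<lambda>x. h x - f0 x) < \<epsilon> / 3"
    using Cc_dense_orlicz_space[OF \<Phi> M lc D h] by blast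
  note shrunk = gauge_norm_shrunk_approximant[OF \<Phi> h Cc_in_orlicz_space[OF \<Phi> M f0(1)] hk
      \<open>0 < k\<close> \<open>0 < \<epsilon> / 3\<close> f0(2)]
  show ?thesis
    using that[OF Cc_cmult[OF f0(1)] _ disjI2[OF shrunk(1)]] shrunk(2) by simp
qed

lemma Cc_approx_sequence_inside_gauge_ball:
  fixes M :: "'a::{t2_space, second_countable_topology} measure"
  assumes \<Phi>: "N_function \<Phi>" and M: "radon_measure M"
    and lc: "locally_compact_space (euclidean :: 'a topology)"
    and D: "Delta2 (compact (UNIV :: 'a set)) \<Phi>"
    and h: "h \<in> orlicz_space M \<Phi>" and hk: "gauge_norm M \<Phi> h \<le> k"
  obtains f :: "nat \<Rightarrow> 'a \<Rightarrow> real"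
  where "f 0 = (\<lambda>x. 0)" "\<And>n. f n \<in> Cc" "\<And>n. f n = (\<lambda>x. 0) \<or> gauge_norm M \<Phi> (f n) < k"
    "\<And>n. 1 \<le> n \<Longrightarrow> gauge_norm M \<Phi> (\<lambda>x. h x - f n x) < (1 / 2) ^ (n + 2)"
    "\<And>n. 1 \<le> n \<Longrightarrow> gauge_norm M \<Phi> (\<lambda>x. f (Suc n) x - f n x) < (1 / 2) ^ n"
proof -
  have "\<exists>f. f \<in> Cc \<and> gauge_norm M \<Phi> (\<lambda>x. h x - f x) < (1 / 2) ^ (n + 2) \<and>
      (f = (\<lambda>x. 0) \<or> gauge_norm M \<Phi> f < k)" for n
    by (rule Cc_approx_inside_gauge_ball[OF \<Phi> M lc D h hk, of "(1 / 2) ^ (n + 2)"]) auto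
  then obtain f' where f': "\<And>n. f' n \<in> Cc" "\<And>n. gauge_norm M \<Phi> (\<lambda>x. h x - f' n x) < (1 / 2) ^ (n + 2)"
    "\<And>n. f' n = (\<lambda>x. 0) \<or> gauge_norm M \<Phi> (f' n) < k"
    by metis
  define f where "f n = (if n = 0 then (\<lambda>x. 0) else f' n)" for n
  have close: "gauge_norm M \<Phi> (\<lambda>x. h x - f n x) < (1 / 2) ^ (n + 2)" if "1 \<le> n" for n
    using f'(2) that by (simp add: f_def)
  have "f n \<in> Cc" for n
    using f'(1) by (simp add: f_def Cc_zero)
  then have f_orlicz: "f n \<in> orlicz_space M \<Phi>" for n
    by (rule Cc_in_orlicz_space[OF \<Phi> M])
  have "gauge_norm M \<Phi> (\<lambda>x. f (Suc n) x - f n x) < (1 / 2) ^ n" if "1 \<le> n" for n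
  proof -
    have "(\<lambda>x. f (Suc n) x - f n x) = (\<lambda>x. (h x - f n x) - (h x - f (Suc n) x))"
      by auto
    then have "gauge_norm M \<Phi> (\<lambda>x. f (Suc n) x - f n x)
        \<le> gauge_norm M \<Phi> (\<lambda>x. h x - f n x) + gauge_norm M \<Phi> (\<lambda>x. h x - f (Suc n) x)"
      using gauge_norm_diff_le[OF \<Phi> orlicz_space_diff[OF \<Phi> h f_orlicz] orlicz_space_diff[OF \<Phi> h f_orlicz]]
      by simp
    also have "\<dots> < (1 / 2) ^ (n + 2) + (1 / 2) ^ (Suc n + 2)"
      using close[of n] close[of "Suc n"] that by (intro add_strict_mono) auto
    also have "\<dots> \<le> (1 / 2) ^ n"
      by (simp add: power_add)
    finally show ?thesis .
  qed
  then show ?thesis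
    using that[of f] f'(1,3) close by (simp add: f_def Cc_zero)
qed

section \<open>Urysohn ladders around a point\<close>

definition ladder_weight :: "(nat \<Rightarrow> 'a \<Rightarrow> real) \<Rightarrow> nat \<Rightarrow> 'a \<Rightarrow> real" where
  "ladder_weight \<phi> n x = (case n of 0 \<Rightarrow> 1 | Suc m \<Rightarrow> \<phi> m x) - \<phi> n x"

lemma sum_ladder_weight: "(\<Sum>n\<le>N. ladder_weight \<phi> n x) = 1 - \<phi> N x"
  by (induction N) (auto simp: ladder_weight_def)

locale urysohn_ladder =
  fixes u :: "'a::t2_space" and W :: "nat \<Rightarrow> 'a set" and \<phi> :: "nat \<Rightarrow> 'a \<Rightarrow> real"
  assumes open_W: "open (W n)"
    and centre_in_W: "u \<in> W n"
    and W_Suc_subset: "W (Suc n) \<subseteq> W n"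
    and compact_closure_W0: "compact (closure (W 0))"
    and W_shrinks: "open S \<Longrightarrow> u \<in> S \<Longrightarrow> \<exists>n. W n \<subseteq> S"
    and continuous_\<phi>: "continuous_on UNIV (\<phi> n)"
    and \<phi>_nonneg: "0 \<le> \<phi> n x"
    and \<phi>_le_1: "\<phi> n x \<le> 1"
    and \<phi>_eq_1: "x \<in> W (Suc n) \<Longrightarrow> \<phi> n x = 1"
    and \<phi>_eq_0: "x \<notin> W n \<Longrightarrow> \<phi> n x = 0"
begin

lemma W_antimono: "m \<le> n \<Longrightarrow> W n \<subseteq> W m"
  by (rule lift_Suc_antimono_le[of W, OF W_Suc_subset])

lemma \<phi>_Suc_le: "\<phi> (Suc n) x \<le> \<phi> n x"
  by (cases "x \<in> W (Suc n)") (simp_all add: \<phi>_eq_1 \<phi>_eq_0 \<phi>_le_1 \<phi>_nonneg)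

lemma separated_from_centre:
  assumes "v \<noteq> u"
  obtains n N where "open N" "v \<in> N" "N \<inter> W n = {}"
proof -
  obtain S N where SN: "open S" "open N" "u \<in> S" "v \<in> N" "S \<inter> N = {}"
    using hausdorff[OF assms[symmetric]] by metis
  obtain n where "W n \<subseteq> S"
    using W_shrinks[OF SN(1,3)] by metis
  show ?thesis
  proof (rule that[of N n])
    show "N \<inter> W n = {}"
      using SN(5) \<open>W n \<subseteq> S\<close> by blast
  qed (use SN in simp_all)
qed

definition exit_index :: "'a \<Rightarrow> nat" where
  "exit_index x = (LEAST n. x \<notin> W n)"

lemma exit_index_le: "x \<notin> W n \<Longrightarrow> exit_index x \<le> n"
  unfolding exit_index_def by (rule Least_le)

lemma not_in_W_beyond_exit_index:
  assumes "x \<noteq> u" "exit_index x \<le> n"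
  shows "x \<notin> W n"
proof -
  obtain m N where "open N" "x \<in> N" "N \<inter> W m = {}"
    using separated_from_centre[OF assms(1)] .
  then have "x \<notin> W m"
    by blast
  then have "x \<notin> W (exit_index x)"
    unfolding exit_index_def by (rule LeastI)
  then show ?thesis
    using W_antimono[OF assms(2)] by blast
qed

lemma ladder_weight_nonneg: "0 \<le> ladder_weight \<phi> n x"
  using \<phi>_Suc_le \<phi>_le_1 by (cases n) (auto simp: ladder_weight_def)

lemma continuous_ladder_weight: "continuous_on UNIV (ladder_weight \<phi> n)"
  unfolding ladder_weight_def using continuous_\<phi>
  by (cases n) (auto intro!: continuous_intros)

lemma sum_ladder_weight_exit_index:
  "x \<noteq> u \<Longrightarrow> (\<Sum>n\<le>exit_index x. ladder_weight \<phi> n x) = 1"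
  using not_in_W_beyond_exit_index \<phi>_eq_0 by (simp add: sum_ladder_weight)

lemma ladder_weight_beyond_exit_index:
  "x \<noteq> u \<Longrightarrow> exit_index x < n \<Longrightarrow> ladder_weight \<phi> n x = 0"
  using not_in_W_beyond_exit_index \<phi>_eq_0
  by (cases n) (auto simp: ladder_weight_def less_Suc_eq_le)

lemma sum_ladder_weight_beyond_exit_index:
  assumes "x \<noteq> u" "exit_index x \<le> N"
  shows "(\<Sum>n\<le>N. ladder_weight \<phi> n x * a n) = (\<Sum>n\<le>exit_index x. ladder_weight \<phi> n x * a n)"
  using assms(2)
proof (induction N rule: dec_induct)
  case (step m)
  then show ?case
    using ladder_weight_beyond_exit_index[OF assms(1), of "Suc m"] by simp
qed simp

lemma ladder_weight_below:
  assumes "x \<in> W m" "n < m"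
  shows "ladder_weight \<phi> n x = 0"
proof -
  have "\<phi> j x = 1" if "j < m" for j
    using assms(1) W_antimono[of "Suc j" m] that by (intro \<phi>_eq_1) auto
  then show ?thesis
    using assms(2) by (cases n) (auto simp: ladder_weight_def)
qed

lemma ladder_weight_nonzero:
  assumes "ladder_weight \<phi> n x \<noteq> 0" "1 \<le> n"
  shows "x \<in> W (n - 1)"
proof (rule ccontr)
  assume "x \<notin> W (n - 1)"
  then have "\<phi> (n - 1) x = 0" "\<phi> n x = 0"
    using \<phi>_eq_0 W_antimono[of "n - 1" n] by auto
  then show False
    using assms by (cases n) (auto simp: ladder_weight_def)
qed

end

lemma shrinking_compact_neighbourhoods:
  fixes u :: "'a::{t2_space, second_countable_topology}"
  assumes lc: "locally_compact_space (euclidean :: 'a topology)"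
    and V: "\<And>n. open (V n)" "\<And>n. u \<in> V n"
  obtains W where "\<And>n. open (W n)" "\<And>n. u \<in> W n" "\<And>n. compact (closure (W n))"
    "\<And>n. closure (W n) \<subseteq> V n" "\<And>n. closure (W (Suc n)) \<subseteq> W n"
    "\<And>S. open S \<Longrightarrow> u \<in> S \<Longrightarrow> \<exists>n. W n \<subseteq> S"
proof -
  obtain A :: "nat \<Rightarrow> 'a set" where A: "\<And>i. open (A i)" "\<And>i. u \<in> A i"
    "\<And>S. open S \<Longrightarrow> u \<in> S \<Longrightarrow> eventually (\<lambda>i. A i \<subseteq> S) sequentially"
    using countable_basis_at_decseq[of u] by blast
  have "\<exists>V. open P \<and> u \<in> P \<longrightarrow> open V \<and> u \<in> V \<and> compact (closure V) \<and> closure V \<subseteq> P" for P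
    using locally_compact_neighbourhood[OF lc] by metis
  then obtain shrink where shrink: "\<And>P. open P \<Longrightarrow> u \<in> P \<Longrightarrow>
      open (shrink P) \<and> u \<in> shrink P \<and> compact (closure (shrink P)) \<and> closure (shrink P) \<subseteq> P"
    by metis
  define W where "W = rec_nat (shrink (V 0)) (\<lambda>n Wn. shrink (Wn \<inter> V (Suc n) \<inter> A n))"
  have W_0: "W 0 = shrink (V 0)" and W_Suc: "W (Suc n) = shrink (W n \<inter> V (Suc n) \<inter> A n)" for n
    by (simp_all add: W_def)
  have W: "open (W n) \<and> u \<in> W n \<and> compact (closure (W n)) \<and> closure (W n) \<subseteq> V n \<and>
      closure (W (Suc n)) \<subseteq> W n \<inter> A n" for n
  proof (induction n)
    case 0
    then show ?case
      using shrink[of "V 0"] shrink[of "W 0 \<inter> V 1 \<inter> A 0"] V A by (simp add: W_0 W_Suc open_Int)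
  next
    case (Suc n)
    then show ?case
      using shrink[of "W (Suc n) \<inter> V (Suc (Suc n)) \<inter> A (Suc n)"] shrink[of "W n \<inter> V (Suc n) \<inter> A n"] V A
      by (simp add: W_Suc open_Int)
  qed
  have shrinks: "\<exists>n. W n \<subseteq> S" if S: "open S" "u \<in> S" for S
  proof -
    obtain i where "A i \<subseteq> S"
      using A(3)[OF S] eventually_happens' sequentially_bot by blast
    then show ?thesis
      using W[of i] closure_subset[of "W (Suc i)"] by (intro exI[of _ "Suc i"]) auto
  qed
  have "open (W n)" "u \<in> W n" "compact (closure (W n))" "closure (W n) \<subseteq> V n"
    "closure (W (Suc n)) \<subseteq> W n" for n
    using W[of n] by auto
  from that[OF this shrinks] show ?thesis .
qed

lemma urysohn_ladder_exists:
  fixes u :: "'a::{t2_space, second_countable_topology}"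
  assumes lc: "locally_compact_space (euclidean :: 'a topology)"
    and V: "\<And>n. open (V n)" "\<And>n. u \<in> V n"
  obtains W \<phi> where "urysohn_ladder u W \<phi>" "\<And>n. W n \<subseteq> V n"
proof -
  obtain W where W: "\<And>n. open (W n)" "\<And>n. u \<in> W n" "\<And>n. compact (closure (W n))"
    "\<And>n. closure (W n) \<subseteq> V n" "\<And>n. closure (W (Suc n)) \<subseteq> W n"
    "\<And>S. open S \<Longrightarrow> u \<in> S \<Longrightarrow> \<exists>n. W n \<subseteq> S"
    using shrinking_compact_neighbourhoods[OF lc, where V = V] V by blast
  have "\<exists>\<psi>. \<psi> \<in> Cc \<and> (\<forall>x. 0 \<le> \<psi> x \<and> \<psi> x \<le> 1) \<and> (\<forall>x\<in>closure (W (Suc n)). \<psi> x = 1) \<and>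
      (\<forall>x. x \<notin> W n \<longrightarrow> \<psi> x = 0)" for n
    using locally_compact_Urysohn[OF lc W(3) W(1) W(5)] by metis
  then obtain \<phi> where \<phi>: "\<And>n. \<phi> n \<in> Cc" "\<And>n x. 0 \<le> \<phi> n x \<and> \<phi> n x \<le> 1"
    "\<And>n x. x \<in> closure (W (Suc n)) \<Longrightarrow> \<phi> n x = 1" "\<And>n x. x \<notin> W n \<Longrightarrow> \<phi> n x = 0"
    by metis
  have "urysohn_ladder u W \<phi>"
  proof
    show "W (Suc n) \<subseteq> W n" for n
      using W(5)[of n] closure_subset[of "W (Suc n)"] by auto
    show "\<phi> n x = 1" if "x \<in> W (Suc n)" for n x
      using \<phi>(3) closure_subset[of "W (Suc n)"] that by auto
    show "continuous_on UNIV (\<phi> n)" for n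
      using CcD(1)[OF \<phi>(1)] .
  qed (use W \<phi> in auto)
  then show ?thesis
    using that W(4) closure_subset by blast
qed

section \<open>Gluing approximants along an Urysohn ladder\<close>

lemma sum_power_half_le: "(\<Sum>j=m..<n. (1 / 2 :: real) ^ j) \<le> 2 * (1 / 2) ^ m"
proof (cases "m \<le> n")
  case True
  have "(\<Sum>j=m..<n. (1 / 2 :: real) ^ j) = 2 * (1 / 2) ^ m - 2 * (1 / 2) ^ n"
    using True by (induction n rule: dec_induct) simp_all
  then show ?thesis
    by simp
qed simp

lemma gauge_norm_telescope_le:
  assumes "N_function \<Phi>" "\<And>j. f j \<in> orlicz_space M \<Phi>" "m \<le> n"
  shows "gauge_norm M \<Phi> (\<lambda>x. f n x - f m x) \<le> (\<Sum>j=m..<n. gauge_norm M \<Phi> (\<lambda>x. f (Suc j) x - f j x))"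
proof -
  have "(\<lambda>x. f n x - f m x) = (\<lambda>x. \<Sum>j=m..<n. f (Suc j) x - f j x)"
  proof
    fix x
    show "f n x - f m x = (\<Sum>j=m..<n. f (Suc j) x - f j x)"
      using sum_Suc_diff'[OF assms(3), of "\<lambda>j. f j x"] by simp
  qed
  then show ?thesis
    using gauge_norm_sum_le[OF assms(1), of "{m..<n}" "\<lambda>j x. f (Suc j) x - f j x" M]
      orlicz_space_diff[OF assms(1) assms(2) assms(2)] by simp
qed

lemma gauge_norm_Cc_le_near_unit:
  fixes gm :: "'g::{t2_space, second_countable_topology} \<Rightarrow> 'g \<Rightarrow> 'g"
  assumes haar: "left_haar_system G2 gm gi lam" and \<Phi>: "N_function \<Phi>"
    and h: "h \<in> Cc" and v0: "v0 \<in> unit_space gm gi" and "0 \<le> k"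
    and small: "h = (\<lambda>x. 0) \<or> gauge_norm (lam v0) \<Phi> h < k"
  obtains V where "open V" "v0 \<in> V" "\<And>v. v \<in> V \<inter> unit_space gm gi \<Longrightarrow> gauge_norm (lam v) \<Phi> h \<le> k"
proof (cases "h = (\<lambda>x. 0)")
  case True
  then show ?thesis
    using that[of UNIV] \<open>0 \<le> k\<close> by (simp add: gauge_norm_zero[OF \<Phi>])
next
  case False
  then have "gauge_norm (lam v0) \<Phi> h < k"
    using small by blast
  then obtain V where "open V" "v0 \<in> V" "\<And>v. v \<in> V \<inter> unit_space gm gi \<Longrightarrow> gauge_norm (lam v) \<Phi> h < k"
    using gauge_norm_Cc_upper_semicontinuous[OF haar \<Phi> h v0] by metis
  then show ?thesis
    using that[of V] by (meson less_imp_le)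
qed

lemma Cc_sequence_bounds_near_unit:
  fixes gm :: "'g::{t2_space, second_countable_topology} \<Rightarrow> 'g \<Rightarrow> 'g"
  assumes haar: "left_haar_system G2 gm gi lam" and \<Phi>: "N_function \<Phi>"
    and u: "u \<in> unit_space gm gi" and f: "\<And>n. f n \<in> Cc" and "0 \<le> k"
    and small: "\<And>n. f n = (\<lambda>x. 0) \<or> gauge_norm (lam u) \<Phi> (f n) < k"
    and increment: "\<And>n. 1 \<le> n \<Longrightarrow> gauge_norm (lam u) \<Phi> (\<lambda>x. f (Suc n) x - f n x) < (1 / 2) ^ n"
  obtains V where "\<And>n. open (V n)" "\<And>n. u \<in> V n"
    "\<And>n v. v \<in> V n \<Longrightarrow> v \<in> unit_space gm gi \<Longrightarrow> gauge_norm (lam v) \<Phi> (f (Suc n)) \<le> k"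
    "\<And>n v. v \<in> V n \<Longrightarrow> v \<in> unit_space gm gi \<Longrightarrow> 1 \<le> n \<Longrightarrow>
      gauge_norm (lam v) \<Phi> (\<lambda>x. f (Suc n) x - f n x) < (1 / 2) ^ n"
proof -
  have "\<exists>V. open V \<and> u \<in> V \<and> (\<forall>v \<in> V \<inter> unit_space gm gi. gauge_norm (lam v) \<Phi> (f (Suc n)) \<le> k \<and>
      (1 \<le> n \<longrightarrow> gauge_norm (lam v) \<Phi> (\<lambda>x. f (Suc n) x - f n x) < (1 / 2) ^ n))" for n
  proof -
    obtain V1 where V1: "open V1" "u \<in> V1"
      "\<And>v. v \<in> V1 \<inter> unit_space gm gi \<Longrightarrow> gauge_norm (lam v) \<Phi> (f (Suc n)) \<le> k"
      using gauge_norm_Cc_le_near_unit[OF haar \<Phi> f u \<open>0 \<le> k\<close> small] by metis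
    obtain V2 where V2: "open V2" "u \<in> V2" "\<And>v. v \<in> V2 \<inter> unit_space gm gi \<Longrightarrow> 1 \<le> n \<Longrightarrow>
        gauge_norm (lam v) \<Phi> (\<lambda>x. f (Suc n) x - f n x) < (1 / 2) ^ n"
    proof (cases "1 \<le> n")
      case True
      then show ?thesis
        using gauge_norm_Cc_upper_semicontinuous[OF haar \<Phi> Cc_diff[OF f f] u increment] that by metis
    qed (use that[of UNIV] in simp)
    show ?thesis
      using V1 V2 by (intro exI[of _ "V1 \<inter> V2"]) auto
  qed
  then obtain V where "\<And>n. open (V n)" "\<And>n. u \<in> V n"
    "\<And>n v. v \<in> V n \<inter> unit_space gm gi \<Longrightarrow> gauge_norm (lam v) \<Phi> (f (Suc n)) \<le> k \<and>
      (1 \<le> n \<longrightarrow> gauge_norm (lam v) \<Phi> (\<lambda>x. f (Suc n) x - f n x) < (1 / 2) ^ n)"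
    by metis
  then show ?thesis
    using that by blast
qed

locale section_gluing = urysohn_ladder u W \<phi>
  for u :: "'g::{t2_space, second_countable_topology}" and W \<phi> +
  fixes G2 :: "('g \<times> 'g) set" and gm gi lam and \<Phi> :: "real \<Rightarrow> real"
    and g :: "'g \<Rightarrow> real" and k :: real and f :: "nat \<Rightarrow> 'g \<Rightarrow> real"
  assumes groupoid: "topological_groupoid G2 gm gi"
    and haar: "left_haar_system G2 gm gi lam"
    and \<Phi>: "N_function \<Phi>"
    and unit_u: "u \<in> unit_space gm gi"
    and g: "g \<in> orlicz_space (lam u) \<Phi>" and g_norm: "gauge_norm (lam u) \<Phi> g \<le> k"
    and f_Cc: "f n \<in> Cc" and f_0: "f 0 = (\<lambda>x. 0)"
    and f_close: "1 \<le> n \<Longrightarrow> gauge_norm (lam u) \<Phi> (\<lambda>x. g x - f n x) < (1 / 2) ^ (n + 2)"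
    and f_bounded: "v \<in> W n \<Longrightarrow> v \<in> unit_space gm gi \<Longrightarrow> gauge_norm (lam v) \<Phi> (f (Suc n)) \<le> k"
    and f_increment: "v \<in> W n \<Longrightarrow> v \<in> unit_space gm gi \<Longrightarrow> 1 \<le> n \<Longrightarrow>
      gauge_norm (lam v) \<Phi> (\<lambda>x. f (Suc n) x - f n x) < (1 / 2) ^ n"
begin

definition glued :: "'g \<Rightarrow> 'g \<Rightarrow> real" where
  "glued v = (if v = u then g else (\<lambda>x. \<Sum>n\<le>exit_index v. ladder_weight \<phi> n v * f n x))"

lemma glued_centre: "glued u = g"
  by (simp add: glued_def)

lemma glued_off_centre: "v \<noteq> u \<Longrightarrow> glued v = (\<lambda>x. \<Sum>n\<le>exit_index v. ladder_weight \<phi> n v * f n x)"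
  by (simp add: glued_def)

lemma f_orlicz: "v \<in> unit_space gm gi \<Longrightarrow> f n \<in> orlicz_space (lam v) \<Phi>"
  using Cc_in_orlicz_space[OF \<Phi> left_haar_system_radon[OF haar] f_Cc] .

lemma k_nonneg: "0 \<le> k"
  using gauge_norm_nonneg[OF \<Phi> g] g_norm by linarith

lemma glued_orlicz:
  assumes "v \<in> unit_space gm gi"
  shows "glued v \<in> orlicz_space (lam v) \<Phi>"
proof (cases "v = u")
  case False
  then show ?thesis
    unfolding glued_off_centre[OF False]
    by (intro orlicz_space_sum[OF \<Phi>] orlicz_space_cmult[OF \<Phi>] f_orlicz[OF assms])
qed (simp add: glued_centre g)

lemma gauge_norm_glued_le:
  assumes v: "v \<in> unit_space gm gi"
  shows "gauge_norm (lam v) \<Phi> (glued v) \<le> k"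
proof (cases "v = u")
  case False
  show ?thesis
    unfolding glued_off_centre[OF False]
  proof (rule gauge_norm_convex_combination_le[OF \<Phi> finite_atMost])
    fix n assume nonzero: "ladder_weight \<phi> n v \<noteq> 0"
    show "gauge_norm (lam v) \<Phi> (f n) \<le> k"
    proof (cases n)
      case (Suc m)
      then have "v \<in> W m"
        using ladder_weight_nonzero[OF nonzero] by simp
      then show ?thesis
        using f_bounded[OF _ v] Suc by simp
    qed (simp add: f_0 gauge_norm_zero[OF \<Phi>] k_nonneg)
  qed (use f_orlicz[OF v] ladder_weight_nonneg sum_ladder_weight_exit_index[OF False] in auto)
qed (simp add: glued_centre g_norm)

lemma gauge_norm_f_diff_le:
  assumes v: "v \<in> W (n - 1)" "v \<in> unit_space gm gi" and "1 \<le> m" "m \<le> n"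
  shows "gauge_norm (lam v) \<Phi> (\<lambda>x. f n x - f m x) \<le> 2 * (1 / 2) ^ m"
proof -
  have "gauge_norm (lam v) \<Phi> (\<lambda>x. f n x - f m x)
      \<le> (\<Sum>j=m..<n. gauge_norm (lam v) \<Phi> (\<lambda>x. f (Suc j) x - f j x))"
    by (rule gauge_norm_telescope_le[OF \<Phi> f_orlicz[OF v(2)] \<open>m \<le> n\<close>])
  also have "\<dots> \<le> (\<Sum>j=m..<n. (1 / 2) ^ j)"
  proof (rule sum_mono)
    fix j assume j: "j \<in> {m..<n}"
    then have "W (n - 1) \<subseteq> W j"
      by (intro W_antimono) auto
    then have "v \<in> W j"
      using v(1) by blast
    then show "gauge_norm (lam v) \<Phi> (\<lambda>x. f (Suc j) x - f j x) \<le> (1 / 2) ^ j"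
      using f_increment[OF _ v(2)] j \<open>1 \<le> m\<close> by (simp add: less_imp_le)
  qed
  also have "\<dots> \<le> 2 * (1 / 2) ^ m"
    by (rule sum_power_half_le)
  finally show ?thesis .
qed

lemma gauge_norm_glued_minus_f_le:
  assumes v: "v \<in> W m" "v \<in> unit_space gm gi" "v \<noteq> u" and "1 \<le> m"
  shows "gauge_norm (lam v) \<Phi> (\<lambda>x. glued v x - f m x) \<le> 2 * (1 / 2) ^ m"
proof -
  have "(\<lambda>x. glued v x - f m x) = (\<lambda>x. \<Sum>n\<le>exit_index v. ladder_weight \<phi> n v * (f n x - f m x))"
    using sum_ladder_weight_exit_index[OF v(3)]
    by (simp add: glued_off_centre[OF v(3)] right_diff_distrib sum_subtractf flip: sum_distrib_right)
  moreover have "gauge_norm (lam v) \<Phi> (\<lambda>x. \<Sum>n\<le>exit_index v. ladder_weight \<phi> n v * (f n x - f m x))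
      \<le> 2 * (1 / 2) ^ m"
  proof (rule gauge_norm_convex_combination_le[OF \<Phi> finite_atMost])
    fix n assume nonzero: "ladder_weight \<phi> n v \<noteq> 0"
    then have "m \<le> n"
      using ladder_weight_below[OF v(1)] by (meson not_le)
    then show "gauge_norm (lam v) \<Phi> (\<lambda>x. f n x - f m x) \<le> 2 * (1 / 2) ^ m"
      using ladder_weight_nonzero[OF nonzero] \<open>1 \<le> m\<close>
      by (intro gauge_norm_f_diff_le[OF _ v(2) \<open>1 \<le> m\<close>]) auto
  qed (use orlicz_space_diff[OF \<Phi> f_orlicz[OF v(2)] f_orlicz[OF v(2)]] ladder_weight_nonneg
      sum_ladder_weight_exit_index[OF v(3)] in auto)
  ultimately show ?thesis
    by simp
qed

lemma glued_close_near_centre: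
  assumes "0 < \<epsilon>"
  shows "\<exists>h\<in>Cc. \<exists>V. open V \<and> u \<in> V \<and>
    (\<forall>v \<in> V \<inter> unit_space gm gi. gauge_norm (lam v) \<Phi> (\<lambda>x. glued v x - h x) < \<epsilon>)"
proof -
  obtain m where m: "(1 / 2 :: real) ^ m < \<epsilon> / 2"
    using real_arch_pow_inv[of "\<epsilon> / 2" "1 / 2"] assms by auto
  have "2 * (1 / 2 :: real) ^ Suc m = (1 / 2) ^ m" "(1 / 2 :: real) ^ (Suc m + 2) = (1 / 2) ^ m / 8"
    by (simp_all add: power_add)
  then have small: "2 * (1 / 2 :: real) ^ Suc m < \<epsilon>" "(1 / 2 :: real) ^ (Suc m + 2) < \<epsilon>"
    using m zero_le_power[of "1 / 2 :: real" m] by linarith+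
  have "gauge_norm (lam v) \<Phi> (\<lambda>x. glued v x - f (Suc m) x) < \<epsilon>"
    if v: "v \<in> W (Suc m) \<inter> unit_space gm gi" for v
  proof (cases "v = u")
    case True
    then show ?thesis
      using f_close[of "Suc m"] small(2) by (simp add: glued_centre)
  next
    case False
    then show ?thesis
      using gauge_norm_glued_minus_f_le[of v "Suc m"] v small(1) by simp
  qed
  then show ?thesis
    using f_Cc open_W centre_in_W by blast
qed

lemma glued_close_away_from_centre:
  assumes "u0 \<noteq> u"
  shows "\<exists>h\<in>Cc. \<exists>V. open V \<and> u0 \<in> V \<and>
    (\<forall>v \<in> V \<inter> unit_space gm gi. gauge_norm (lam v) \<Phi> (\<lambda>x. glued v x - h x) = 0)"
proof -
  obtain m V where V: "open V" "u0 \<in> V" "V \<inter> W m = {}"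
    using separated_from_centre[OF assms] .
  define h where "h x = (\<Sum>n\<le>m. ladder_weight \<phi> n (range_map gm gi x) * f n x)" for x
  have "h \<in> Cc"
    unfolding h_def using continuous_on_range_map[OF groupoid] continuous_ladder_weight f_Cc
    by (intro Cc_sum Cc_mult_continuous) (auto intro: continuous_on_compose2)
  moreover have "gauge_norm (lam v) \<Phi> (\<lambda>x. glued v x - h x) = 0" if v: "v \<in> V \<inter> unit_space gm gi" for v
  proof -
    have "v \<noteq> u" "exit_index v \<le> m"
      using v V(3) centre_in_W exit_index_le by auto
    then have "glued v x = h x" if "range_map gm gi x = v" for x
      using that sum_ladder_weight_beyond_exit_index[of v m]
      by (simp add: glued_off_centre h_def)
    then have "AE x in lam v. glued v x - h x = 0"
      using left_haar_system_AE_range_fibre[OF haar, of v] v by (auto elim: eventually_mono)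
    then show ?thesis
      using gauge_norm_cong_AE[of "\<lambda>x. glued v x - h x" "\<lambda>x. 0"] by (simp add: gauge_norm_zero[OF \<Phi>])
  qed
  ultimately show ?thesis
    using V(1,2) by blast
qed

lemma glued_vanishes_at_infinity:
  "\<exists>K. compact K \<and> K \<subseteq> unit_space gm gi \<and> (\<forall>v \<in> unit_space gm gi - K. glued v = (\<lambda>x. 0))"
proof (intro exI conjI ballI)
  show "compact (closure (W 0) \<inter> unit_space gm gi)"
    using compact_Int_closed[OF compact_closure_W0 closed_unit_space[OF groupoid]] .
  fix v assume "v \<in> unit_space gm gi - closure (W 0) \<inter> unit_space gm gi"
  then have "v \<notin> W 0"
    using closure_subset[of "W 0"] by blast
  then have "v \<noteq> u" "exit_index v = 0"
    using centre_in_W exit_index_le[of v 0] by auto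
  then show "glued v = (\<lambda>x. 0)"
    by (simp add: glued_off_centre f_0)
qed simp

lemma glued_in_E0: "glued \<in> E0 gm gi lam \<Phi>"
  unfolding E0_def
proof (intro CollectI conjI ballI allI impI)
  fix u0 and \<epsilon> :: real assume "0 < \<epsilon>"
  show "\<exists>h\<in>Cc. \<exists>V. open V \<and> u0 \<in> V \<and>
      (\<forall>v \<in> V \<inter> unit_space gm gi. gauge_norm (lam v) \<Phi> (\<lambda>x. glued v x - h x) < \<epsilon>)"
  proof (cases "u0 = u")
    case True
    then show ?thesis
      using glued_close_near_centre[OF \<open>0 < \<epsilon>\<close>] by simp
  next
    case False
    then obtain h V where "h \<in> Cc" "open V" "u0 \<in> V"
      "\<forall>v \<in> V \<inter> unit_space gm gi. gauge_norm (lam v) \<Phi> (\<lambda>x. glued v x - h x) = 0"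
      using glued_close_away_from_centre by blast
    then show ?thesis
      using \<open>0 < \<epsilon>\<close> by (intro bexI[of _ h] exI[of _ V]) auto
  qed
  obtain K where "compact K" "K \<subseteq> unit_space gm gi" "\<forall>v \<in> unit_space gm gi - K. glued v = (\<lambda>x. 0)"
    using glued_vanishes_at_infinity by blast
  then show "\<exists>K. compact K \<and> K \<subseteq> unit_space gm gi \<and>
      (\<forall>v \<in> unit_space gm gi - K. gauge_norm (lam v) \<Phi> (glued v) < \<epsilon>)"
    using \<open>0 < \<epsilon>\<close> by (intro exI[of _ K]) (simp add: gauge_norm_zero[OF \<Phi>])
qed (rule glued_orlicz)

lemma E0_norm_glued_le: "E0_norm gm gi lam \<Phi> glued \<le> k"
  unfolding E0_norm_def using unit_u gauge_norm_glued_le by (intro cSUP_least) auto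

end

theorem lemma3p4:
  fixes G2 :: "('g::{t2_space, second_countable_topology} \<times> 'g) set"
    and gm :: "'g \<Rightarrow> 'g \<Rightarrow> 'g" and gi :: "'g \<Rightarrow> 'g"
    and lam :: "'g \<Rightarrow> 'g measure"
    and \<Phi> \<Psi> :: "real \<Rightarrow> real"
    and u :: 'g and g :: "'g \<Rightarrow> real" and k :: real
  assumes "topological_groupoid G2 gm gi"
    and "locally_compact_space (euclidean :: 'g topology)"
    and "left_haar_system G2 gm gi lam"
    and "N_function \<Phi>"
    and "\<Psi> = complementary_function \<Phi>"
    and "Delta2 (compact (UNIV :: 'g set)) \<Phi>"
    and "u \<in> unit_space gm gi"
    and "g \<in> orlicz_space (lam u) \<Phi>"
    and "gauge_norm (lam u) \<Phi> g \<le> k"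
  shows "\<exists>\<eta> \<in> E0 gm gi lam \<Phi>.
           (AE x in lam u. \<eta> u x = g x) \<and> E0_norm gm gi lam \<Phi> \<eta> \<le> k"
proof -
  note groupoid = assms(1) and lc = assms(2) and haar = assms(3) and \<Phi> = assms(4)
    and u = assms(7) and g = assms(8,9)
  obtain f where f: "f 0 = (\<lambda>x. 0)" "\<And>n. f n \<in> Cc"
    "\<And>n. f n = (\<lambda>x. 0) \<or> gauge_norm (lam u) \<Phi> (f n) < k"
    "\<And>n. 1 \<le> n \<Longrightarrow> gauge_norm (lam u) \<Phi> (\<lambda>x. g x - f n x) < (1 / 2) ^ (n + 2)"
    "\<And>n. 1 \<le> n \<Longrightarrow> gauge_norm (lam u) \<Phi> (\<lambda>x. f (Suc n) x - f n x) < (1 / 2) ^ n"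
    by (rule Cc_approx_sequence_inside_gauge_ball[OF \<Phi> left_haar_system_radon[OF haar u] lc assms(6) g]) blast
  have "0 \<le> k"
    using gauge_norm_nonneg[OF \<Phi> g(1)] g(2) by linarith
  obtain V where V: "\<And>n. open (V n)" "\<And>n. u \<in> V n"
    "\<And>n v. v \<in> V n \<Longrightarrow> v \<in> unit_space gm gi \<Longrightarrow> gauge_norm (lam v) \<Phi> (f (Suc n)) \<le> k"
    "\<And>n v. v \<in> V n \<Longrightarrow> v \<in> unit_space gm gi \<Longrightarrow> 1 \<le> n \<Longrightarrow>
      gauge_norm (lam v) \<Phi> (\<lambda>x. f (Suc n) x - f n x) < (1 / 2) ^ n"
    using Cc_sequence_bounds_near_unit[OF haar \<Phi> u f(2) \<open>0 \<le> k\<close> f(3,5)] by metis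
  obtain W \<phi> where ladder: "urysohn_ladder u W \<phi>" and W: "\<And>n. W n \<subseteq> V n"
    using urysohn_ladder_exists[OF lc, of V] V(1,2) by blast
  interpret section_gluing u W \<phi> G2 gm gi lam \<Phi> g k f
    using groupoid haar \<Phi> u g f(1,2,4) V(3,4)[OF subsetD[OF W]]
    by (intro section_gluing.intro[OF ladder] section_gluing_axioms.intro) simp_all
  show ?thesis
    using glued_in_E0 E0_norm_glued_le by (intro bexI[of _ glued]) (simp_all add: glued_centre)
qed

end
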